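(* Let $\gamma_a,\gamma_s>0$ and consider \[ \begin{cases} \gamma_a T_a'=-\lambda(T_a-T_s)+\varepsilon_a\sigma_B|T_s|^3T_s-2\varepsilon_a\sigma_B|T_a|^3T_a+q\beta_a(T_a),\\ \gamma_s T_s'=-\lambda(T_s-T_a)-\sigma_B|T_s|^3T_s+\varepsilon_a\sigma_B|T_a|^3T_a+q\beta_s(T_s),\\ T_a(0)=T_a^{(0)},\quad T_s(0)=T_s^{(0)}. \end{cases} \] (a) Assume $\lambda=0$, $q>0$, $\sigma_B>0$, $\beta_a=0$, $\beta_s$ is the piecewise linear coalbedo described in the context, $\varepsilon_a>2$, and $T_a^{(0)}\ge0$, $T_s^{(0)}\ge0$. Then the problem admits a unique maximal solution, and this solution blows up in finite time. (b) Assume $\lambda>0$, $q>0$, $\sigma_B>0$, $\beta_a\ge0$ and $\beta_s>0$ are globally Lipschitz continuous on $\mathbb R$, and $\varepsilon_a>2$. Then there exist initial conditions $T_a^{(0)}\ge0$, $T_s^{(0)}\ge0$ for which the solution of the problem blows up in finite time.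
   Context: The piecewise linear coalbedo is $\beta_s(T)=\beta_{s,-}$ for $T\le T_{s,-}$, $\beta_s(T)=\beta_{s,-}+(\beta_{s,+}-\beta_{s,-})\frac{T-T_{s,-}}{T_{s,+}-T_{s,-}}$ for $T\in[T_{s,-},T_{s,+}]$, and $\beta_s(T)=\beta_{s,+}$ for $T\ge T_{s,+}$, where $T_{s,+}>T_{s,-}>0$ and $\beta_{s,+}>\beta_{s,-}>0$. *)

theory Defs
  imports "HOL-Analysis.Analysis"
begin

definition coalbedo_pl :: "real \<Rightarrow> real \<Rightarrow> real \<Rightarrow> real \<Rightarrow> real \<Rightarrow> real" where
  "coalbedo_pl Tm Tp bm bp T =
     (if T \<le> Tm then bm
      else if T \<le> Tp then bm + (bp - bm) * (T - Tm) / (Tp - Tm)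
      else bp)"

definition rhs_a :: "real \<Rightarrow> real \<Rightarrow> real \<Rightarrow> real \<Rightarrow> (real \<Rightarrow> real) \<Rightarrow> real \<Rightarrow> real \<Rightarrow> real" where
  "rhs_a lam eps sig q ba Ta Ts =
     - lam * (Ta - Ts) + eps * sig * \<bar>Ts\<bar>^3 * Ts - 2 * eps * sig * \<bar>Ta\<bar>^3 * Ta + q * ba Ta"

definition rhs_s :: "real \<Rightarrow> real \<Rightarrow> real \<Rightarrow> real \<Rightarrow> (real \<Rightarrow> real) \<Rightarrow> real \<Rightarrow> real \<Rightarrow> real" where
  "rhs_s lam eps sig q bs Ta Ts =
     - lam * (Ts - Ta) - sig * \<bar>Ts\<bar>^3 * Ts + eps * sig * \<bar>Ta\<bar>^3 * Ta + q * bs Ts"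

definition is_solution ::
  "real \<Rightarrow> real \<Rightarrow> real \<Rightarrow> real \<Rightarrow> real \<Rightarrow> real \<Rightarrow> (real \<Rightarrow> real) \<Rightarrow> (real \<Rightarrow> real)
   \<Rightarrow> real \<Rightarrow> real \<Rightarrow> ereal \<Rightarrow> (real \<Rightarrow> real) \<Rightarrow> (real \<Rightarrow> real) \<Rightarrow> bool" where
  "is_solution ga gs lam eps sig q ba bs Ta0 Ts0 T Ta Ts \<longleftrightarrow>
     0 < T \<and> Ta 0 = Ta0 \<and> Ts 0 = Ts0 \<and>
     (\<forall>t. 0 \<le> t \<and> ereal t < T \<longrightarrow>
        (\<exists>Da Ds. (Ta has_real_derivative Da) (at t within {s. 0 \<le> s \<and> ereal s < T}) \<and>
                 (Ts has_real_derivative Ds) (at t within {s. 0 \<le> s \<and> ereal s < T}) \<and>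
                 ga * Da = rhs_a lam eps sig q ba (Ta t) (Ts t) \<and>
                 gs * Ds = rhs_s lam eps sig q bs (Ta t) (Ts t)))"

definition is_maximal_solution ::
  "real \<Rightarrow> real \<Rightarrow> real \<Rightarrow> real \<Rightarrow> real \<Rightarrow> real \<Rightarrow> (real \<Rightarrow> real) \<Rightarrow> (real \<Rightarrow> real)
   \<Rightarrow> real \<Rightarrow> real \<Rightarrow> ereal \<Rightarrow> (real \<Rightarrow> real) \<Rightarrow> (real \<Rightarrow> real) \<Rightarrow> bool" where
  "is_maximal_solution ga gs lam eps sig q ba bs Ta0 Ts0 T Ta Ts \<longleftrightarrow>
     is_solution ga gs lam eps sig q ba bs Ta0 Ts0 T Ta Ts \<and>
     (\<forall>T' Ta' Ts'. T \<le> T' \<longrightarrow> is_solution ga gs lam eps sig q ba bs Ta0 Ts0 T' Ta' Ts' \<longrightarrow>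
        (\<forall>t. 0 \<le> t \<and> ereal t < T \<longrightarrow> Ta' t = Ta t \<and> Ts' t = Ts t) \<longrightarrow> T' = T)"

definition blows_up :: "ereal \<Rightarrow> (real \<Rightarrow> real) \<Rightarrow> (real \<Rightarrow> real) \<Rightarrow> bool" where
  "blows_up T Ta Ts \<longleftrightarrow> T < \<infinity> \<and>
     filterlim (\<lambda>t. \<bar>Ta t\<bar> + \<bar>Ts t\<bar>) at_top (at_left (real_of_ereal T))"

definition unique_maximal_solution_blows_up ::
  "real \<Rightarrow> real \<Rightarrow> real \<Rightarrow> real \<Rightarrow> real \<Rightarrow> real \<Rightarrow> (real \<Rightarrow> real) \<Rightarrow> (real \<Rightarrow> real)
   \<Rightarrow> real \<Rightarrow> real \<Rightarrow> bool" where
  "unique_maximal_solution_blows_up ga gs lam eps sig q ba bs Ta0 Ts0 \<longleftrightarrow>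
     (\<exists>T Ta Ts. is_maximal_solution ga gs lam eps sig q ba bs Ta0 Ts0 T Ta Ts \<and>
        blows_up T Ta Ts \<and>
        (\<forall>T' Ta' Ts'. is_maximal_solution ga gs lam eps sig q ba bs Ta0 Ts0 T' Ta' Ts' \<longrightarrow>
           T' = T \<and> (\<forall>t. 0 \<le> t \<and> ereal t < T \<longrightarrow> Ta' t = Ta t \<and> Ts' t = Ts t)))"

end

(*
  The right-hand sides are locally Lipschitz, so Picard iteration gives local solutions and
  Gronwall's inequality gives uniqueness; Gronwall applied to the squared negative parts shows that
  nonnegative data stay nonnegative.

  For eps > 2 put kappa = (2 + eps) / 2 and delta = (eps - 2) / 2 > 0. Along a nonnegative solution
  the weighted energy E = gamma_a T_a + kappa gamma_s T_s satisfies
    E' >= sigma delta (T_a^4 + T_s^4) - lambda (kappa - 1) T_s + q beta_a(T_a) + kappa q beta_s(T_s),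
  and E^4 <= 8 (gamma_a + kappa gamma_s)^4 (T_a^4 + T_s^4). This is a Riccati inequality E' >= c E^4:
  for lambda = 0 after replacing E by E + 1 (using beta_s >= beta_{s,-} > 0), and for lambda > 0 as
  long as E stays above a threshold, which is guaranteed by a large initial surface temperature.
  Then E is nondecreasing and every solution lives less than 1 / (3 c E(0)^3). The maximal
  solution, glued from all solutions, cannot stay bounded, so it blows up.
*)
theory Submission
  imports Defs
begin

lemma DERIV_nonneg_within_Icc_imp_le:
  fixes u u' :: "real \<Rightarrow> real"
  assumes "x \<le> y"
    and deriv: "\<And>z. z \<in> {x..y} \<Longrightarrow> (u has_real_derivative u' z) (at z within {x..y})"
    and nonneg: "\<And>z. z \<in> {x<..<y} \<Longrightarrow> 0 \<le> u' z"
  shows "u x \<le> u y"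
proof (rule DERIV_nonneg_imp_increasing_open[OF \<open>x \<le> y\<close>])
  show "continuous_on {x..y} u"
    using deriv by (rule DERIV_continuous_on)
  fix z assume "x < z" "z < y"
  then show "\<exists>d. (u has_real_derivative d) (at z) \<and> 0 \<le> d"
    using deriv[of z] nonneg[of z] by (auto simp: at_within_Icc_at)
qed

lemma mvt_within_Icc:
  fixes u u' :: "real \<Rightarrow> real"
  assumes "x < y" and "\<And>z. z \<in> {x..y} \<Longrightarrow> (u has_real_derivative u' z) (at z within {x..y})"
  shows "\<exists>z\<in>{x<..<y}. u y - u x = (y - x) * u' z"
  using mvt_simple[of x y u "\<lambda>z. (*) (u' z)"] assms
  by (auto simp: has_field_derivative_def mult.commute)

lemma gronwall_vanishing:
  fixes w w' :: "real \<Rightarrow> real"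
  assumes "0 \<le> T"
    and deriv: "\<And>t. t \<in> {0..T} \<Longrightarrow> (w has_real_derivative w' t) (at t within {0..T})"
    and growth: "\<And>t. t \<in> {0..T} \<Longrightarrow> w' t \<le> C * w t"
    and nonneg: "\<And>t. t \<in> {0..T} \<Longrightarrow> 0 \<le> w t" and "w 0 = 0"
  shows "w T = 0"
proof -
  define v where "v t = - exp (- C * t) * w t" for t
  have "v 0 \<le> v T"
  proof (rule DERIV_nonneg_within_Icc_imp_le[OF \<open>0 \<le> T\<close>])
    fix t assume "t \<in> {0..T}"
    show "(v has_real_derivative exp (- C * t) * (C * w t - w' t)) (at t within {0..T})"
      unfolding v_def
      by (rule derivative_eq_intros refl deriv[OF \<open>t \<in> {0..T}\<close>] | simp add: algebra_simps)+
  next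
    fix t assume "t \<in> {0<..<T}"
    then show "0 \<le> exp (- C * t) * (C * w t - w' t)"
      using growth[of t] by simp
  qed
  then have "w T \<le> 0"
    using \<open>w 0 = 0\<close> by (simp add: v_def mult_le_0_iff)
  then show ?thesis
    using nonneg[of T] \<open>0 \<le> T\<close> by simp
qed

lemma has_real_derivative_min_zero_sq:
  "((\<lambda>x. (min x 0)^2) has_real_derivative 2 * min x 0) (at x)"
proof (cases x "0::real" rule: linorder_cases)
  case less
  have "((\<lambda>x. x^2) has_real_derivative 2 * min x 0) (at x)"
    using less by (auto intro!: derivative_eq_intros)
  then show ?thesis
    by (rule has_field_derivative_transform_within_open[where S = "{..<0}"])
      (use less in \<open>auto simp: min_def\<close>)
next
  case greater
  have "((\<lambda>x. 0) has_real_derivative 2 * min x 0) (at x)"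
    using greater by simp
  then show ?thesis
    by (rule has_field_derivative_transform_within_open[where S = "{0<..}"])
      (use greater in \<open>auto simp: min_def\<close>)
next
  case equal
  have "((\<lambda>y. (min y 0)^2 / y) \<longlongrightarrow> 0) (at (0::real))"
  proof (rule Lim_null_comparison)
    show "\<forall>\<^sub>F y in at 0. norm ((min y 0)^2 / y) \<le> \<bar>y\<bar>"
      by (intro always_eventually allI)
        (auto simp: min_def abs_divide power2_eq_square)
    show "((\<lambda>y. \<bar>y\<bar>) \<longlongrightarrow> 0) (at (0::real))"
      using tendsto_rabs[OF tendsto_ident_at[of "0::real" UNIV]] by simp
  qed
  then show ?thesis
    using equal by (simp add: DERIV_def)
qed

lemma has_real_derivative_transfer_local:
  assumes "(f has_real_derivative D) (at t within A)" and "t \<in> B" and "open U" "t \<in> U"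
    and "A \<inter> U = B \<inter> U" and "\<And>x. x \<in> B \<inter> U \<Longrightarrow> f x = g x"
  shows "(g has_real_derivative D) (at t within B)"
proof -
  have "at t within A = at t within B"
    by (rule at_within_nhd[OF \<open>t \<in> U\<close> \<open>open U\<close>]) (use assms(5) in blast)
  then have "(f has_real_derivative D) (at t within B)"
    using assms(1) by simp
  moreover obtain e where "e > 0" "ball t e \<subseteq> U"
    using \<open>open U\<close> \<open>t \<in> U\<close> openE by blast
  ultimately show ?thesis
    using \<open>t \<in> B\<close> assms(6)
    by (elim has_field_derivative_transform_within) (auto simp: dist_commute subset_iff)
qed

lemma has_real_derivative_translate:
  assumes "(f has_real_derivative D) (at (t + c) within S)"
  shows "((\<lambda>x. f (x + c)) has_real_derivative D) (at t within {x. x + c \<in> S})"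
proof -
  have "((\<lambda>x. x + c) has_real_derivative 1) (at t within {x. x + c \<in> S})"
    by (auto intro!: derivative_eq_intros)
  from DERIV_image_chain[OF has_field_derivative_subset[OF assms] this]
  show ?thesis
    by (auto simp: o_def)
qed

lemma stays_above_initial_value:
  fixes u u' :: "real \<Rightarrow> real"
  assumes "0 \<le> t"
    and deriv: "\<And>s. s \<in> {0..t} \<Longrightarrow> (u has_real_derivative u' s) (at s within {0..t})"
    and "l < u 0" and increasing: "\<And>s. s \<in> {0..t} \<Longrightarrow> l \<le> u s \<Longrightarrow> 0 < u' s"
  shows "u 0 \<le> u t"
proof (rule ccontr)
  assume "\<not> u 0 \<le> u t"
  define m where "m = max (u t) l"
  define S where "S = {s \<in> {0..t}. u s \<le> m}"
  define s1 where "s1 = Inf S"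
  have "closed S"
    unfolding S_def using deriv
    by (intro continuous_on_closed_Collect_le DERIV_continuous_on continuous_on_const) auto
  moreover have "t \<in> S" "bdd_below S"
    using \<open>0 \<le> t\<close> by (auto simp: S_def m_def)
  ultimately have "s1 \<in> S"
    unfolding s1_def using closed_contains_Inf by blast
  then have s1: "0 < s1" "s1 \<le> t" "u s1 \<le> m"
    using \<open>\<not> u 0 \<le> u t\<close> \<open>l < u 0\<close> by (auto simp: S_def m_def intro!: le_neq_trans)
  have above: "m < u z" if "0 < z" "z < s1" for z
    using cInf_lower[of z S] \<open>bdd_below S\<close> that s1 by (force simp: S_def s1_def)
  have "\<And>z. z \<in> {0..s1} \<Longrightarrow> (u has_real_derivative u' z) (at z within {0..s1})"
    using deriv s1 by (force intro: has_field_derivative_subset)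
  then obtain z where z: "z \<in> {0<..<s1}" "u s1 - u 0 = (s1 - 0) * u' z"
    using mvt_within_Icc[OF \<open>0 < s1\<close>] by blast
  have "0 < u' z"
    using increasing[of z] above[of z] z s1 by (auto simp: m_def)
  then have "0 < (s1 - 0) * u' z"
    using s1 by simp
  moreover have "m < u 0"
    using \<open>\<not> u 0 \<le> u t\<close> \<open>l < u 0\<close> by (simp add: m_def)
  ultimately show False
    using z s1 by linarith
qed

text \<open>Along a solution of \<open>u' \<ge> c u\<^sup>4\<close> the function \<open>1 / u\<^sup>3\<close> decreases at rate at least \<open>3 c\<close>
  while staying positive.\<close>
lemma riccati_lifespan_bound:
  fixes u u' :: "real \<Rightarrow> real"
  assumes "0 \<le> t" "0 < c"
    and deriv: "\<And>s. s \<in> {0..t} \<Longrightarrow> (u has_real_derivative u' s) (at s within {0..t})"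
    and pos: "\<And>s. s \<in> {0..t} \<Longrightarrow> 0 < u s"
    and growth: "\<And>s. s \<in> {0..t} \<Longrightarrow> c * (u s)^4 \<le> u' s"
  shows "t < 1 / (3 * c * (u 0)^3)"
proof (cases "t = 0")
  case True
  then show ?thesis
    using pos[of 0] \<open>0 < c\<close> by simp
next
  case False
  then have "0 < t"
    using \<open>0 \<le> t\<close> by simp
  define v' where "v' s = - 3 * u' s / (u s)^4" for s
  have "((\<lambda>s. 1 / (u s)^3) has_real_derivative v' s) (at s within {0..t})" if "s \<in> {0..t}" for s
    using pos[OF that]
    by (auto intro!: derivative_eq_intros deriv[OF that]
        simp: v'_def field_simps power2_eq_square power3_eq_cube power4_eq_xxxx)
  then obtain z where z: "z \<in> {0<..<t}" "1 / (u t)^3 - 1 / (u 0)^3 = (t - 0) * v' z"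
    using mvt_within_Icc[OF \<open>0 < t\<close>] by blast
  have "v' z \<le> - 3 * c"
    using growth[of z] pos[of z] z by (simp add: v'_def field_simps)
  then have "1 / (u t)^3 - 1 / (u 0)^3 \<le> - 3 * c * t"
    using z mult_left_mono[of "v' z" "- 3 * c" t] \<open>0 < t\<close> by (simp add: algebra_simps)
  moreover have "0 < 1 / (u t)^3"
    using pos[of t] \<open>0 \<le> t\<close> by simp
  ultimately have "3 * c * t < 1 / (u 0)^3"
    by linarith
  then show ?thesis
    using pos[of 0] \<open>0 < c\<close> \<open>0 \<le> t\<close> by (simp add: field_simps)
qed

lemma riccati_above_initial_value:
  fixes u u' :: "real \<Rightarrow> real"
  assumes "0 < c" "0 < u 0" "s \<in> {0..t}"
    and deriv: "\<And>s. s \<in> {0..t} \<Longrightarrow> (u has_real_derivative u' s) (at s within {0..t})"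
    and growth: "\<And>s. s \<in> {0..t} \<Longrightarrow> u 0 / 2 \<le> u s \<Longrightarrow> c * (u s)^4 \<le> u' s"
  shows "u 0 \<le> u s"
proof (rule stays_above_initial_value[of s u u' "u 0 / 2"])
  show "\<And>r. r \<in> {0..s} \<Longrightarrow> (u has_real_derivative u' r) (at r within {0..s})"
    using \<open>s \<in> {0..t}\<close> by (force intro: has_field_derivative_subset[OF deriv])
next
  fix r assume r: "r \<in> {0..s}" "u 0 / 2 \<le> u r"
  then have "0 < c * (u r)^4"
    using \<open>0 < c\<close> \<open>0 < u 0\<close> by simp
  also have "\<dots> \<le> u' r"
    using growth[of r] r \<open>s \<in> {0..t}\<close> by auto
  finally show "0 < u' r" .
qed (use assms in auto)

lemma riccati_on_Icc:
  fixes u u' :: "real \<Rightarrow> real"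
  assumes "0 \<le> t" "0 < c" "0 < u 0"
    and deriv: "\<And>s. s \<in> {0..t} \<Longrightarrow> (u has_real_derivative u' s) (at s within {0..t})"
    and growth: "\<And>s. s \<in> {0..t} \<Longrightarrow> u 0 / 2 \<le> u s \<Longrightarrow> c * (u s)^4 \<le> u' s"
  shows "t < 1 / (3 * c * (u 0)^3)"
    and "\<And>x y. 0 \<le> x \<Longrightarrow> x \<le> y \<Longrightarrow> y \<le> t \<Longrightarrow> u x \<le> u y"
proof -
  note above = riccati_above_initial_value[OF \<open>0 < c\<close> \<open>0 < u 0\<close> _ deriv growth]
  have slope: "c * (u s)^4 \<le> u' s" "0 \<le> u' s" if "s \<in> {0..t}" for s
  proof -
    show "c * (u s)^4 \<le> u' s"
      using growth[OF that] above[OF that] \<open>0 < u 0\<close> by simp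
    moreover have "0 \<le> c * (u s)^4"
      using \<open>0 < c\<close> by simp
    ultimately show "0 \<le> u' s"
      by linarith
  qed
  show "t < 1 / (3 * c * (u 0)^3)"
  proof (rule riccati_lifespan_bound[OF \<open>0 \<le> t\<close> \<open>0 < c\<close> deriv])
    fix s assume "s \<in> {0..t}"
    then show "0 < u s" "c * (u s)^4 \<le> u' s"
      using above[of s] slope(1)[of s] \<open>0 < u 0\<close> by auto
  qed
  show "u x \<le> u y" if "0 \<le> x" "x \<le> y" "y \<le> t" for x y
  proof (rule DERIV_nonneg_within_Icc_imp_le[OF \<open>x \<le> y\<close>])
    have "{x..y} \<subseteq> {0..t}"
      using that by auto
    then show "(u has_real_derivative u' z) (at z within {x..y})" if "z \<in> {x..y}" for z
      using that deriv[of z] by (auto intro: has_field_derivative_subset)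
    show "0 \<le> u' z" if "z \<in> {x<..<y}" for z
      using that \<open>0 \<le> x\<close> \<open>y \<le> t\<close> slope(2)[of z] by auto
  qed
qed

lemma abs_pow4_diff_le:
  fixes a b R :: real
  assumes "0 \<le> a" "0 \<le> b" "a \<le> R" "b \<le> R"
  shows "\<bar>a^4 - b^4\<bar> \<le> 4 * R^3 * \<bar>a - b\<bar>"
proof -
  define S where "S = a^3 + a^2 * b + a * b^2 + b^3"
  have "a^4 - b^4 = (a - b) * S"
    by (simp add: S_def algebra_simps power2_eq_square power3_eq_cube power4_eq_xxxx)
  moreover have "0 \<le> S"
    using assms by (simp add: S_def)
  moreover have "S \<le> 4 * R^3"
  proof -
    have "a^3 \<le> R^3" "b^3 \<le> R^3" "a^2 * b \<le> R^2 * R" "a * b^2 \<le> R * R^2"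
      using assms by (auto intro!: power_mono mult_mono)
    then show ?thesis
      by (simp add: S_def power2_eq_square power3_eq_cube)
  qed
  ultimately show ?thesis
    using mult_right_mono[of S "4 * R^3" "\<bar>a - b\<bar>"] by (simp add: abs_mult mult.commute)
qed

lemma pow4_add_le:
  fixes a b R :: real
  assumes "0 \<le> a" "0 \<le> b" "a \<le> R" "b \<le> R"
  shows "a^4 + b^4 \<le> R^3 * (a + b)"
proof -
  have "a^3 * a \<le> R^3 * a" "b^3 * b \<le> R^3 * b"
    using assms by (auto intro!: mult_right_mono power_mono)
  then show ?thesis
    by (simp add: power_numeral_reduce algebra_simps)
qed

lemma signed_pow4_lipschitz_nonneg:
  fixes a b R :: real
  assumes "0 \<le> a" "\<bar>a\<bar> \<le> R" "\<bar>b\<bar> \<le> R"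
  shows "\<bar>\<bar>a\<bar>^3 * a - \<bar>b\<bar>^3 * b\<bar> \<le> 4 * R^3 * \<bar>a - b\<bar>"
proof (cases "0 \<le> b")
  case True
  then show ?thesis
    using abs_pow4_diff_le[of a b R] assms by (simp add: power_numeral_reduce)
next
  case False
  have "\<bar>a\<bar>^3 * a - \<bar>b\<bar>^3 * b = a^4 + (-b)^4"
    using assms False by (simp add: power_numeral_reduce)
  moreover have "a^4 + (-b)^4 \<le> R^3 * \<bar>a - b\<bar>"
    using pow4_add_le[of a "-b" R] False assms by simp
  moreover have "0 \<le> R^3 * \<bar>a - b\<bar>"
    using assms by simp
  ultimately show ?thesis
    by simp
qed

lemma signed_pow4_lipschitz:
  fixes a b R :: real
  assumes "\<bar>a\<bar> \<le> R" "\<bar>b\<bar> \<le> R"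
  shows "\<bar>\<bar>a\<bar>^3 * a - \<bar>b\<bar>^3 * b\<bar> \<le> 4 * R^3 * \<bar>a - b\<bar>"
proof (cases "0 \<le> a")
  case False
  then have "\<bar>\<bar>-a\<bar>^3 * (-a) - \<bar>-b\<bar>^3 * (-b)\<bar> \<le> 4 * R^3 * \<bar>(-a) - (-b)\<bar>"
    using assms by (intro signed_pow4_lipschitz_nonneg) auto
  then show ?thesis
    by (simp add: abs_minus_commute)
qed (use assms signed_pow4_lipschitz_nonneg in auto)

lemma add_pow4_le: "((x::real) + y)^4 \<le> 8 * (x^4 + y^4)"
proof -
  have sq: "(x + y)^2 \<le> 2 * (x^2 + y^2)"
    using zero_le_power2[of "x - y"] by (simp add: power2_eq_square algebra_simps)
  have sq4: "(x^2 + y^2)^2 \<le> 2 * (x^4 + y^4)"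
    using zero_le_power2[of "x^2 - y^2"] by (simp add: power2_eq_square power4_eq_xxxx algebra_simps)
  have "(x + y)^4 = ((x + y)^2)^2"
    by simp
  also have "\<dots> \<le> (2 * (x^2 + y^2))^2"
    using sq by (intro power_mono) auto
  also have "\<dots> = 4 * (x^2 + y^2)^2"
    by (subst power_mult_distrib) simp
  also have "\<dots> \<le> 8 * (x^4 + y^4)"
    using sq4 by simp
  finally show ?thesis .
qed

lemma cross_term_le_of_lipschitz:
  fixes x y p r K ga gs :: real
  assumes "\<bar>p\<bar> \<le> K * (\<bar>x\<bar> + \<bar>y\<bar>)" "\<bar>r\<bar> \<le> K * (\<bar>x\<bar> + \<bar>y\<bar>)" "0 < ga" "0 < gs" "0 \<le> K"
  shows "2 * x * (p / ga) + 2 * y * (r / gs) \<le> 4 * K * (1 / ga + 1 / gs) * (x^2 + y^2)"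
proof -
  define X where "X = \<bar>x\<bar> + \<bar>y\<bar>"
  have X: "X^2 \<le> 2 * (x^2 + y^2)"
    using zero_le_power2[of "\<bar>x\<bar> - \<bar>y\<bar>"] unfolding X_def by (simp add: power2_eq_square algebra_simps)
  have "x * p \<le> \<bar>x\<bar> * \<bar>p\<bar>" "y * r \<le> \<bar>y\<bar> * \<bar>r\<bar>"
    by (simp_all add: abs_mult[symmetric])
  moreover have "\<bar>x\<bar> * \<bar>p\<bar> \<le> X * (K * X)" "\<bar>y\<bar> * \<bar>r\<bar> \<le> X * (K * X)"
    using assms by (auto intro!: mult_mono simp: X_def)
  ultimately have "x * p \<le> K * X^2" "y * r \<le> K * X^2"
    by (simp_all add: power2_eq_square algebra_simps)
  then have "2 * x * (p / ga) + 2 * y * (r / gs) \<le> 2 * (K * X^2) / ga + 2 * (K * X^2) / gs"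
    using assms(3,4) by (simp add: add_mono divide_right_mono)
  also have "\<dots> = 2 * K * (1 / ga + 1 / gs) * X^2"
    by (simp add: field_simps)
  also have "\<dots> \<le> 2 * K * (1 / ga + 1 / gs) * (2 * (x^2 + y^2))"
    using X assms by (intro mult_left_mono) auto
  finally show ?thesis
    by (simp add: algebra_simps)
qed

section \<open>Local existence by Picard iteration\<close>

text \<open>Paths are bounded continuous functions on the whole line; clamping the upper integration
  limit to \<open>[0, h]\<close> keeps the integral of a path inside this space.\<close>
locale picard_iteration =
  fixes F :: "'a::banach \<Rightarrow> 'a" and y0 :: 'a and r L M h :: real
  assumes radius: "0 < r"
    and lipschitz: "L-lipschitz_on (cball y0 r) F"
    and bounded: "\<And>x. x \<in> cball y0 r \<Longrightarrow> norm (F x) \<le> M"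
    and step: "0 < h" "h * M \<le> r" "h * L \<le> 1/2"
begin

definition clamp :: "real \<Rightarrow> real" where
  "clamp t = max 0 (min h t)"

definition paths :: "(real \<Rightarrow>\<^sub>C 'a) set" where
  "paths = PiC UNIV (\<lambda>_. cball y0 r)"

definition integral_map :: "(real \<Rightarrow>\<^sub>C 'a) \<Rightarrow> real \<Rightarrow> 'a" where
  "integral_map x t = y0 + integral {0..clamp t} (\<lambda>s. F (apply_bcontfun x s))"

definition picard_map :: "(real \<Rightarrow>\<^sub>C 'a) \<Rightarrow> (real \<Rightarrow>\<^sub>C 'a)" where
  "picard_map x = Bcontfun (integral_map x)"

lemma clamp_mem: "clamp t \<in> {0..h}"
  using step by (auto simp: clamp_def)

lemma bound_nonneg: "0 \<le> M"
  using bounded[of y0] radius by (meson centre_in_cball less_imp_le norm_ge_zero order_trans)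

lemma mem_paths: "x \<in> paths \<longleftrightarrow> (\<forall>t. apply_bcontfun x t \<in> cball y0 r)"
  by (simp add: paths_def mem_PiC_iff Pi_iff)

lemma continuous_on_F_path: "x \<in> paths \<Longrightarrow> continuous_on A (\<lambda>s. F (apply_bcontfun x s))"
  by (rule continuous_on_compose2[OF lipschitz_on_continuous_on[OF lipschitz]
        continuous_on_apply_bcontfun]) (auto simp: mem_paths)

lemma integral_map_dist:
  assumes "x \<in> paths"
  shows "norm (integral_map x t - y0) \<le> r"
proof -
  have "norm (integral {0..clamp t} (\<lambda>s. F (apply_bcontfun x s))) \<le> M * (clamp t - 0)"
    using clamp_mem assms by (intro integral_bound continuous_on_F_path bounded) (auto simp: mem_paths)
  also have "\<dots> \<le> h * M"
    using clamp_mem[of t] bound_nonneg by (simp add: mult.commute mult_left_mono)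
  finally show ?thesis
    using step by (simp add: integral_map_def)
qed

lemma integral_map_bcontfun:
  assumes "x \<in> paths"
  shows "integral_map x \<in> bcontfun"
proof (rule bcontfun_normI)
  have "continuous_on {0..h} (\<lambda>u. integral {0..u} (\<lambda>s. F (apply_bcontfun x s)))"
    by (intro indefinite_integral_continuous_1 integrable_continuous_interval
        continuous_on_F_path assms)
  then have "continuous_on UNIV (\<lambda>t. integral {0..clamp t} (\<lambda>s. F (apply_bcontfun x s)))"
    by (rule continuous_on_compose2[of _ _ _ clamp])
      (use step in \<open>auto simp: clamp_def clamp_mem intro!: continuous_intros\<close>)
  then show "continuous_on UNIV (integral_map x)"
    unfolding integral_map_def by (intro continuous_intros)
  show "norm (integral_map x t) \<le> norm y0 + r" for t
    using integral_map_dist[OF assms, of t] norm_triangle_ineq2[of "integral_map x t" y0] by linarith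
qed

lemma apply_picard_map: "x \<in> paths \<Longrightarrow> apply_bcontfun (picard_map x) = integral_map x"
  by (simp add: picard_map_def integral_map_bcontfun Bcontfun_inverse)

lemma picard_map_paths: "picard_map ` paths \<subseteq> paths"
  using integral_map_dist by (auto simp: mem_paths apply_picard_map dist_norm norm_minus_commute)

lemma picard_map_contraction:
  assumes x: "x \<in> paths" and y: "y \<in> paths"
  shows "dist (picard_map x) (picard_map y) \<le> 1/2 * dist x y"
proof (rule dist_bound)
  fix t
  have L: "0 \<le> L"
    using lipschitz by (rule lipschitz_on_nonneg)
  have pointwise: "norm (F (apply_bcontfun x s) - F (apply_bcontfun y s)) \<le> L * dist x y" for s
  proof -
    have "norm (F (apply_bcontfun x s) - F (apply_bcontfun y s))
        \<le> L * dist (apply_bcontfun x s) (apply_bcontfun y s)"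
      using lipschitz_onD[OF lipschitz] x y by (simp add: mem_paths dist_norm)
    also have "\<dots> \<le> L * dist x y"
      using dist_bounded L by (rule mult_left_mono)
    finally show ?thesis .
  qed
  have "dist (apply_bcontfun (picard_map x) t) (apply_bcontfun (picard_map y) t)
      = norm (integral {0..clamp t} (\<lambda>s. F (apply_bcontfun x s) - F (apply_bcontfun y s)))"
    unfolding apply_picard_map[OF x] apply_picard_map[OF y] integral_map_def dist_norm
    by (subst integral_diff) (auto intro!: integrable_continuous_interval continuous_on_F_path x y)
  also have "\<dots> \<le> L * dist x y * (clamp t - 0)"
    using clamp_mem pointwise by (intro integral_bound continuous_intros continuous_on_F_path x y) auto
  also have "\<dots> \<le> L * dist x y * h"
    using clamp_mem[of t] L by (intro mult_left_mono) auto
  also have "\<dots> = (h * L) * dist x y"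
    by (simp add: algebra_simps)
  also have "\<dots> \<le> 1/2 * dist x y"
    using step by (intro mult_right_mono) auto
  finally show "dist (apply_bcontfun (picard_map x) t) (apply_bcontfun (picard_map y) t) \<le> 1/2 * dist x y" .
qed

lemma picard_map_fixpoint: "\<exists>!x\<in>paths. picard_map x = x"
proof (rule Banach_fix[OF _ _ _ _ picard_map_paths picard_map_contraction])
  show "complete paths"
    unfolding complete_eq_closed paths_def by (rule closed_PiC) auto
  have "const_bcontfun y0 \<in> paths"
    using radius by (simp add: mem_paths const_bcontfun.rep_eq)
  then show "paths \<noteq> {}"
    by blast
qed simp_all

lemma local_solution:
  "\<exists>y. y 0 = y0 \<and> (\<forall>t\<in>{0..h}. (y has_vector_derivative F (y t)) (at t within {0..h}))"
proof -
  obtain x where x: "x \<in> paths" "picard_map x = x"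
    using picard_map_fixpoint by blast
  define y where "y = apply_bcontfun x"
  have y: "y t = y0 + integral {0..t} (\<lambda>s. F (y s))" if "t \<in> {0..h}" for t
  proof -
    have "y t = integral_map x t"
      using apply_picard_map[OF x(1)] x(2) by (simp add: y_def)
    also have "\<dots> = y0 + integral {0..t} (\<lambda>s. F (y s))"
      using that by (simp add: integral_map_def clamp_def y_def)
    finally show ?thesis .
  qed
  have "(y has_vector_derivative F (y t)) (at t within {0..h})" if t: "t \<in> {0..h}" for t
  proof -
    have "((\<lambda>u. y0 + integral {0..u} (\<lambda>s. F (y s))) has_vector_derivative 0 + F (y t))
        (at t within {0..h})"
      by (intro derivative_intros integral_has_vector_derivative t)
        (use continuous_on_F_path[OF x(1)] in \<open>auto simp: y_def\<close>)
    then have "((\<lambda>u. y0 + integral {0..u} (\<lambda>s. F (y s))) has_vector_derivative F (y t))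
        (at t within {0..h})"
      by simp
    then show ?thesis
      by (rule has_vector_derivative_transform[OF t, rotated]) (simp add: y)
  qed
  moreover have "y 0 = y0"
    using y[of 0] step by simp
  ultimately show ?thesis
    by blast
qed

end

section \<open>Well-posedness and positivity\<close>

lemma cball_components_le:
  fixes a0 s0 :: real
  assumes "x \<in> cball (a0, s0) r" "\<bar>a0\<bar> \<le> R" "\<bar>s0\<bar> \<le> R"
  shows "\<bar>fst x\<bar> \<le> R + r" "\<bar>snd x\<bar> \<le> R + r"
  using assms dist_fst_le[of "(a0, s0)" x] dist_snd_le[of "(a0, s0)" x] by (auto simp: dist_real_def)

abbreviation time_interval :: "ereal \<Rightarrow> real set" where
  "time_interval T \<equiv> {s. 0 \<le> s \<and> ereal s < T}"

lemma Icc_subset_time_interval: "ereal t1 < T \<Longrightarrow> {0..t1} \<subseteq> time_interval T"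
  by auto (meson ereal_less_eq(3) le_less_trans)

locale energy_balance_model =
  fixes ga gs lam eps sig q :: real and ba bs :: "real \<Rightarrow> real" and La Ls :: real
  assumes ga_pos: "0 < ga" and gs_pos: "0 < gs" and lam_nonneg: "0 \<le> lam"
    and eps_nonneg: "0 \<le> eps" and sig_nonneg: "0 \<le> sig" and q_nonneg: "0 \<le> q"
    and ba_nonneg: "\<And>x. 0 \<le> ba x" and bs_nonneg: "\<And>x. 0 \<le> bs x"
    and ba_lipschitz: "La-lipschitz_on UNIV ba" and bs_lipschitz: "Ls-lipschitz_on UNIV bs"
begin

abbreviation "fa \<equiv> rhs_a lam eps sig q ba"
abbreviation "fs \<equiv> rhs_s lam eps sig q bs"
abbreviation "solution \<equiv> is_solution ga gs lam eps sig q ba bs"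

definition lipschitz_bound :: "real \<Rightarrow> real" where
  "lipschitz_bound R = lam + 8 * eps * sig * R^3 + 4 * sig * R^3 + q * (La + Ls)"

lemma La_nonneg: "0 \<le> La" and Ls_nonneg: "0 \<le> Ls"
  using ba_lipschitz bs_lipschitz by (auto intro: lipschitz_on_nonneg)

lemma lipschitz_bound_nonneg: "0 \<le> R \<Longrightarrow> 0 \<le> lipschitz_bound R"
  using lam_nonneg eps_nonneg sig_nonneg q_nonneg La_nonneg Ls_nonneg
  by (simp add: lipschitz_bound_def)

lemma rhs_a_lipschitz:
  assumes "\<bar>a1\<bar> \<le> R" "\<bar>s1\<bar> \<le> R" "\<bar>a2\<bar> \<le> R" "\<bar>s2\<bar> \<le> R"
  shows "\<bar>fa a1 s1 - fa a2 s2\<bar> \<le> lipschitz_bound R * (\<bar>a1 - a2\<bar> + \<bar>s1 - s2\<bar>)"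
proof -
  define A B where "A = \<bar>a1 - a2\<bar>" and "B = \<bar>s1 - s2\<bar>"
  define Ps Pa where "Ps = \<bar>s1\<bar>^3 * s1 - \<bar>s2\<bar>^3 * s2" and "Pa = \<bar>a1\<bar>^3 * a1 - \<bar>a2\<bar>^3 * a2"
  have R: "0 \<le> R" and es: "0 \<le> eps * sig"
    using assms eps_nonneg sig_nonneg by auto
  have eq: "fa a1 s1 - fa a2 s2
      = - lam * (a1 - a2) + lam * (s1 - s2) + eps * sig * Ps - 2 * eps * sig * Pa + q * (ba a1 - ba a2)"
    unfolding rhs_a_def Ps_def Pa_def by (simp add: algebra_simps)
  have tri: "\<bar>p1 + p2 + p3 - p4 + p5\<bar> \<le> \<bar>p1\<bar> + \<bar>p2\<bar> + \<bar>p3\<bar> + \<bar>p4\<bar> + \<bar>p5\<bar>" for p1 p2 p3 p4 p5 :: real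
    by linarith
  have "\<bar>fa a1 s1 - fa a2 s2\<bar>
      \<le> lam * A + lam * B + eps * sig * \<bar>Ps\<bar> + 2 * eps * sig * \<bar>Pa\<bar> + q * \<bar>ba a1 - ba a2\<bar>"
    unfolding eq using lam_nonneg q_nonneg eps_nonneg sig_nonneg
    by (intro order.trans[OF tri]) (simp add: abs_mult A_def B_def)
  also have "\<dots> \<le> lam * A + lam * B + eps * sig * (4 * R^3 * B) + 2 * eps * sig * (4 * R^3 * A)
      + q * (La * A)"
  proof -
    have "\<bar>Ps\<bar> \<le> 4 * R^3 * B" "\<bar>Pa\<bar> \<le> 4 * R^3 * A"
      unfolding Ps_def Pa_def A_def B_def using assms by (auto intro!: signed_pow4_lipschitz)
    moreover have "\<bar>ba a1 - ba a2\<bar> \<le> La * A"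
      using lipschitz_onD[OF ba_lipschitz, of a1 a2] by (simp add: A_def dist_real_def)
    ultimately show ?thesis
      using q_nonneg es by (intro add_mono mult_left_mono order.refl) auto
  qed
  also have "\<dots> \<le> lipschitz_bound R * (A + B)"
    by (simp add: lipschitz_bound_def algebra_simps A_def B_def)
      (intro add_nonneg_nonneg mult_nonneg_nonneg;
        simp add: R eps_nonneg sig_nonneg q_nonneg La_nonneg Ls_nonneg)
  finally show ?thesis
    by (simp add: A_def B_def)
qed

lemma rhs_s_lipschitz:
  assumes "\<bar>a1\<bar> \<le> R" "\<bar>s1\<bar> \<le> R" "\<bar>a2\<bar> \<le> R" "\<bar>s2\<bar> \<le> R"
  shows "\<bar>fs a1 s1 - fs a2 s2\<bar> \<le> lipschitz_bound R * (\<bar>a1 - a2\<bar> + \<bar>s1 - s2\<bar>)"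
proof -
  define A B where "A = \<bar>a1 - a2\<bar>" and "B = \<bar>s1 - s2\<bar>"
  define Ps Pa where "Ps = \<bar>s1\<bar>^3 * s1 - \<bar>s2\<bar>^3 * s2" and "Pa = \<bar>a1\<bar>^3 * a1 - \<bar>a2\<bar>^3 * a2"
  have R: "0 \<le> R" and es: "0 \<le> eps * sig"
    using assms eps_nonneg sig_nonneg by auto
  have eq: "fs a1 s1 - fs a2 s2
      = - lam * (s1 - s2) + lam * (a1 - a2) + eps * sig * Pa - sig * Ps + q * (bs s1 - bs s2)"
    unfolding rhs_s_def Ps_def Pa_def by (simp add: algebra_simps)
  have tri: "\<bar>p1 + p2 + p3 - p4 + p5\<bar> \<le> \<bar>p1\<bar> + \<bar>p2\<bar> + \<bar>p3\<bar> + \<bar>p4\<bar> + \<bar>p5\<bar>" for p1 p2 p3 p4 p5 :: real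
    by linarith
  have "\<bar>fs a1 s1 - fs a2 s2\<bar>
      \<le> lam * B + lam * A + eps * sig * \<bar>Pa\<bar> + sig * \<bar>Ps\<bar> + q * \<bar>bs s1 - bs s2\<bar>"
    unfolding eq using lam_nonneg q_nonneg eps_nonneg sig_nonneg
    by (intro order.trans[OF tri]) (simp add: abs_mult A_def B_def)
  also have "\<dots> \<le> lam * B + lam * A + eps * sig * (4 * R^3 * A) + sig * (4 * R^3 * B)
      + q * (Ls * B)"
  proof -
    have "\<bar>Ps\<bar> \<le> 4 * R^3 * B" "\<bar>Pa\<bar> \<le> 4 * R^3 * A"
      unfolding Ps_def Pa_def A_def B_def using assms by (auto intro!: signed_pow4_lipschitz)
    moreover have "\<bar>bs s1 - bs s2\<bar> \<le> Ls * B"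
      using lipschitz_onD[OF bs_lipschitz, of s1 s2] by (simp add: B_def dist_real_def)
    ultimately show ?thesis
      using q_nonneg es sig_nonneg by (intro add_mono mult_left_mono order.refl) auto
  qed
  also have "\<dots> \<le> lipschitz_bound R * (A + B)"
    by (simp add: lipschitz_bound_def algebra_simps A_def B_def)
      (intro add_nonneg_nonneg mult_nonneg_nonneg;
        simp add: R eps_nonneg sig_nonneg q_nonneg La_nonneg Ls_nonneg)
  finally show ?thesis
    by (simp add: A_def B_def)
qed

definition vector_field :: "real \<times> real \<Rightarrow> real \<times> real" where
  "vector_field z = (fa (fst z) (snd z) / ga, fs (fst z) (snd z) / gs)"

definition field_lipschitz_bound :: "real \<Rightarrow> real" where
  "field_lipschitz_bound R = 2 * (lipschitz_bound R / ga + lipschitz_bound R / gs)"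

lemma field_lipschitz_bound_nonneg: "0 \<le> R \<Longrightarrow> 0 \<le> field_lipschitz_bound R"
  using ga_pos gs_pos lipschitz_bound_nonneg[of R] by (simp add: field_lipschitz_bound_def)

lemma vector_field_lipschitz:
  assumes "\<bar>fst x\<bar> \<le> R" "\<bar>snd x\<bar> \<le> R" "\<bar>fst y\<bar> \<le> R" "\<bar>snd y\<bar> \<le> R"
  shows "norm (vector_field x - vector_field y) \<le> field_lipschitz_bound R * norm (x - y)"
proof -
  define K where "K = lipschitz_bound R"
  define D where "D = \<bar>fst x - fst y\<bar> + \<bar>snd x - snd y\<bar>"
  have K: "0 \<le> K"
    using assms by (simp add: K_def lipschitz_bound_nonneg)
  have "\<bar>fa (fst x) (snd x) - fa (fst y) (snd y)\<bar> \<le> K * D"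
    "\<bar>fs (fst x) (snd x) - fs (fst y) (snd y)\<bar> \<le> K * D"
    unfolding K_def D_def using assms by (intro rhs_a_lipschitz rhs_s_lipschitz; simp)+
  then have "\<bar>fa (fst x) (snd x) - fa (fst y) (snd y)\<bar> / ga
      + \<bar>fs (fst x) (snd x) - fs (fst y) (snd y)\<bar> / gs \<le> K * D / ga + K * D / gs"
    using ga_pos gs_pos by (intro add_mono divide_right_mono) auto
  moreover have "norm (vector_field x - vector_field y) \<le> \<bar>fa (fst x) (snd x) - fa (fst y) (snd y)\<bar> / ga
      + \<bar>fs (fst x) (snd x) - fs (fst y) (snd y)\<bar> / gs"
    using norm_Pair_le[of "fa (fst x) (snd x) / ga - fa (fst y) (snd y) / ga"
        "fs (fst x) (snd x) / gs - fs (fst y) (snd y) / gs"] ga_pos gs_pos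
    by (simp add: vector_field_def diff_divide_distrib[symmetric] abs_divide)
  ultimately have "norm (vector_field x - vector_field y) \<le> (K / ga + K / gs) * D"
    by (simp add: algebra_simps)
  also have "\<dots> \<le> (K / ga + K / gs) * (2 * norm (x - y))"
    using K ga_pos gs_pos dist_fst_le[of x y] dist_snd_le[of x y]
    by (intro mult_left_mono) (auto simp: D_def dist_norm)
  finally show ?thesis
    by (simp add: K_def field_lipschitz_bound_def algebra_simps)
qed

lemma vector_field_lipschitz_on_cball:
  assumes "\<bar>a0\<bar> \<le> R" "\<bar>s0\<bar> \<le> R"
  shows "(field_lipschitz_bound (R + 1))-lipschitz_on (cball (a0, s0) 1) vector_field"
proof (rule lipschitz_onI)
  fix x y assume "x \<in> cball (a0, s0) 1" "y \<in> cball (a0, s0) 1"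
  then show "dist (vector_field x) (vector_field y) \<le> field_lipschitz_bound (R + 1) * dist x y"
    using cball_components_le[of x a0 s0 1 R] cball_components_le[of y a0 s0 1 R] assms
    unfolding dist_norm by (intro vector_field_lipschitz) auto
qed (use assms field_lipschitz_bound_nonneg in auto)

lemma vector_field_bounded_on_cball:
  assumes "\<bar>a0\<bar> \<le> R" "\<bar>s0\<bar> \<le> R" "x \<in> cball (a0, s0) 1"
  shows "norm (vector_field x) \<le> norm (vector_field 0) + field_lipschitz_bound (R + 1) * (2 * (R + 1))"
proof -
  have x: "\<bar>fst x\<bar> \<le> R + 1" "\<bar>snd x\<bar> \<le> R + 1"
    using cball_components_le[OF assms(3,1,2)] by auto
  then have "norm x \<le> 2 * (R + 1)"
    using norm_Pair_le[of "fst x" "snd x"] by simp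
  then have "field_lipschitz_bound (R + 1) * norm x \<le> field_lipschitz_bound (R + 1) * (2 * (R + 1))"
    using assms field_lipschitz_bound_nonneg[of "R + 1"] by (intro mult_left_mono) auto
  moreover have "norm (vector_field x - vector_field 0) \<le> field_lipschitz_bound (R + 1) * norm x"
    using vector_field_lipschitz[of x "R + 1" 0] x assms by simp
  ultimately show ?thesis
    using norm_triangle_ineq2[of "vector_field x" "vector_field 0"] by simp
qed

lemma solution_of_vector_solution:
  assumes "0 < h" "y 0 = (a0, s0)"
    and deriv: "\<And>t. t \<in> {0..h} \<Longrightarrow> (y has_vector_derivative vector_field (y t)) (at t within {0..h})"
  shows "solution a0 s0 (ereal h) (\<lambda>t. fst (y t)) (\<lambda>t. snd (y t))"
  unfolding is_solution_def
proof (intro conjI allI impI)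
  fix t assume "0 \<le> t \<and> ereal t < ereal h"
  then have "time_interval (ereal h) \<subseteq> {0..h}" and t: "t \<in> {0..h}"
    by auto
  moreover have "((\<lambda>t. fst (y t)) has_real_derivative fst (vector_field (y t))) (at t within {0..h})"
    "((\<lambda>t. snd (y t)) has_real_derivative snd (vector_field (y t))) (at t within {0..h})"
    using bounded_linear.has_vector_derivative[OF bounded_linear_fst deriv[OF t]]
      bounded_linear.has_vector_derivative[OF bounded_linear_snd deriv[OF t]]
    by (simp_all add: has_real_derivative_iff_has_vector_derivative)
  ultimately show "\<exists>Da Ds. ((\<lambda>t. fst (y t)) has_real_derivative Da) (at t within time_interval (ereal h)) \<and>
      ((\<lambda>t. snd (y t)) has_real_derivative Ds) (at t within time_interval (ereal h)) \<and>
      ga * Da = fa (fst (y t)) (snd (y t)) \<and> gs * Ds = fs (fst (y t)) (snd (y t))"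
    using ga_pos gs_pos by (intro exI conjI) (auto intro: has_field_derivative_subset simp: vector_field_def)
qed (use assms in auto)

lemma local_existence:
  assumes "0 \<le> R"
  shows "\<exists>h>0. \<forall>a0 s0. \<bar>a0\<bar> \<le> R \<longrightarrow> \<bar>s0\<bar> \<le> R \<longrightarrow> (\<exists>Ta Ts. solution a0 s0 (ereal h) Ta Ts)"
proof -
  define L where "L = field_lipschitz_bound (R + 1)"
  define M where "M = norm (vector_field 0) + L * (2 * (R + 1))"
  define h where "h = 1 / (2 * (L + M + 1))"
  have "0 \<le> L"
    using assms field_lipschitz_bound_nonneg[of "R + 1"] by (simp add: L_def)
  then have "0 \<le> M"
    using assms by (simp add: M_def)
  have "\<exists>Ta Ts. solution a0 s0 (ereal h) Ta Ts" if "\<bar>a0\<bar> \<le> R" "\<bar>s0\<bar> \<le> R" for a0 s0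
  proof -
    have "L-lipschitz_on (cball (a0, s0) 1) vector_field"
      unfolding L_def using that by (rule vector_field_lipschitz_on_cball)
    moreover have "norm (vector_field x) \<le> M" if "x \<in> cball (a0, s0) 1" for x
      unfolding M_def L_def using \<open>\<bar>a0\<bar> \<le> R\<close> \<open>\<bar>s0\<bar> \<le> R\<close> that by (rule vector_field_bounded_on_cball)
    ultimately interpret picard_iteration vector_field "(a0, s0)" 1 L M h
      using \<open>0 \<le> L\<close> \<open>0 \<le> M\<close> by unfold_locales (auto simp: h_def field_simps)
    obtain y where "y 0 = (a0, s0)"
      and "\<And>t. t \<in> {0..h} \<Longrightarrow> (y has_vector_derivative vector_field (y t)) (at t within {0..h})"
      using local_solution by blast
    then show ?thesis
      using step(1) solution_of_vector_solution by blast
  qed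
  moreover have "0 < h"
    using \<open>0 \<le> L\<close> \<open>0 \<le> M\<close> by (simp add: h_def)
  ultimately show ?thesis
    by blast
qed

lemma solution_init: "solution a0 s0 T Ta Ts \<Longrightarrow> Ta 0 = a0 \<and> Ts 0 = s0 \<and> 0 < T"
  unfolding is_solution_def by auto

lemma solution_has_derivative:
  assumes "solution a0 s0 T Ta Ts" "0 \<le> t" "ereal t < T"
  shows "(Ta has_real_derivative fa (Ta t) (Ts t) / ga) (at t within time_interval T)"
    and "(Ts has_real_derivative fs (Ta t) (Ts t) / gs) (at t within time_interval T)"
proof -
  obtain Da Ds where "(Ta has_real_derivative Da) (at t within time_interval T)"
    "(Ts has_real_derivative Ds) (at t within time_interval T)"
    "ga * Da = fa (Ta t) (Ts t)" "gs * Ds = fs (Ta t) (Ts t)"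
    using assms unfolding is_solution_def by blast
  moreover have "Da = fa (Ta t) (Ts t) / ga" "Ds = fs (Ta t) (Ts t) / gs"
    using calculation ga_pos gs_pos by (auto simp: field_simps)
  ultimately show "(Ta has_real_derivative fa (Ta t) (Ts t) / ga) (at t within time_interval T)"
    "(Ts has_real_derivative fs (Ta t) (Ts t) / gs) (at t within time_interval T)"
    by simp_all
qed

lemma solution_has_derivative_Icc:
  assumes "solution a0 s0 T Ta Ts" "ereal t1 < T" "t \<in> {0..t1}"
  shows "(Ta has_real_derivative fa (Ta t) (Ts t) / ga) (at t within {0..t1})"
    and "(Ts has_real_derivative fs (Ta t) (Ts t) / gs) (at t within {0..t1})"
proof -
  have "0 \<le> t" "ereal t < T"
    using Icc_subset_time_interval[OF assms(2)] assms(3) by auto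
  then show "(Ta has_real_derivative fa (Ta t) (Ts t) / ga) (at t within {0..t1})"
    "(Ts has_real_derivative fs (Ta t) (Ts t) / gs) (at t within {0..t1})"
    using solution_has_derivative[OF assms(1)] Icc_subset_time_interval[OF assms(2)]
    by (auto intro: has_field_derivative_subset)
qed

lemma solution_bounded_Icc:
  assumes "solution a0 s0 T Ta Ts" "ereal t1 < T"
  obtains B where "0 \<le> B" "\<And>t. t \<in> {0..t1} \<Longrightarrow> \<bar>Ta t\<bar> \<le> B \<and> \<bar>Ts t\<bar> \<le> B"
proof -
  have "continuous_on {0..t1} (\<lambda>t. \<bar>Ta t\<bar> + \<bar>Ts t\<bar>)"
    using solution_has_derivative_Icc[OF assms]
    by (intro continuous_intros DERIV_continuous_on) blast+
  then obtain B where "\<forall>x\<in>(\<lambda>t. \<bar>Ta t\<bar> + \<bar>Ts t\<bar>) ` {0..t1}. \<bar>x\<bar> \<le> B"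
    using compact_imp_bounded[OF compact_continuous_image] bounded_real by blast
  then show ?thesis
    by (intro that[of "max B 0"]) force+
qed

lemma solution_unique:
  assumes s1: "solution a0 s0 T1 Ta1 Ts1" and s2: "solution a0 s0 T2 Ta2 Ts2"
    and t: "0 \<le> t" "ereal t < T1" "ereal t < T2"
  shows "Ta1 t = Ta2 t \<and> Ts1 t = Ts2 t"
proof -
  obtain B1 where B1: "0 \<le> B1" "\<And>s. s \<in> {0..t} \<Longrightarrow> \<bar>Ta1 s\<bar> \<le> B1 \<and> \<bar>Ts1 s\<bar> \<le> B1"
    using solution_bounded_Icc[OF s1 t(2)] by blast
  obtain B2 where B2: "\<And>s. s \<in> {0..t} \<Longrightarrow> \<bar>Ta2 s\<bar> \<le> B2 \<and> \<bar>Ts2 s\<bar> \<le> B2"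
    using solution_bounded_Icc[OF s2 t(3)] by blast
  define K where "K = lipschitz_bound (max B1 B2)"
  have K: "0 \<le> K"
    unfolding K_def using B1 by (simp add: lipschitz_bound_nonneg)
  define w where "w s = (Ta1 s - Ta2 s)^2 + (Ts1 s - Ts2 s)^2" for s
  define w' where "w' s = 2 * (Ta1 s - Ta2 s) * ((fa (Ta1 s) (Ts1 s) - fa (Ta2 s) (Ts2 s)) / ga)
     + 2 * (Ts1 s - Ts2 s) * ((fs (Ta1 s) (Ts1 s) - fs (Ta2 s) (Ts2 s)) / gs)" for s
  have "w t = 0"
  proof (rule gronwall_vanishing[of t w w' "4 * K * (1 / ga + 1 / gs)"])
    fix s assume s: "s \<in> {0..t}"
    show "(w has_real_derivative w' s) (at s within {0..t})"
      unfolding w_def w'_def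
      by (rule derivative_eq_intros solution_has_derivative_Icc[OF s1 t(2) s]
          solution_has_derivative_Icc[OF s2 t(3) s] refl)+
        (simp_all add: diff_divide_distrib algebra_simps)
    have bounds: "\<bar>Ta1 s\<bar> \<le> max B1 B2" "\<bar>Ts1 s\<bar> \<le> max B1 B2" "\<bar>Ta2 s\<bar> \<le> max B1 B2"
      "\<bar>Ts2 s\<bar> \<le> max B1 B2"
      using B1(2)[OF s] B2[OF s] by auto
    show "w' s \<le> 4 * K * (1 / ga + 1 / gs) * w s"
      unfolding w_def w'_def
      by (rule cross_term_le_of_lipschitz[OF _ _ ga_pos gs_pos K])
        (unfold K_def, (rule rhs_a_lipschitz rhs_s_lipschitz; rule bounds)+)
    show "0 \<le> w s"
      by (simp add: w_def)
  qed (use t solution_init[OF s1] solution_init[OF s2] in \<open>simp_all add: w_def\<close>)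
  then show ?thesis
    by (simp add: w_def add_nonneg_eq_0_iff)
qed

lemma min_zero_mult_rhs_a_le:
  assumes "\<bar>a\<bar> \<le> R" "\<bar>s\<bar> \<le> R"
  shows "min a 0 * fa a s \<le> (lam + eps * sig * R^3) * (min a 0 * min s 0)"
proof (cases "0 \<le> a")
  case False
  then have a: "a < 0"
    by simp
  have es: "0 \<le> eps * sig"
    using eps_nonneg sig_nonneg by simp
  have "a * s \<le> a * min s 0"
    using a by (cases "0 \<le> s") (auto simp: mult_nonpos_nonneg)
  then have "lam * (a * s) \<le> lam * (a * min s 0)"
    using lam_nonneg by (rule mult_left_mono)
  moreover have "a * (\<bar>s\<bar>^3 * s) \<le> R^3 * (a * min s 0)"
  proof (cases "0 \<le> s")
    case False
    then have "\<bar>s\<bar>^3 * (a * s) \<le> R^3 * (a * s)"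
      using a assms by (intro mult_right_mono power_mono) (auto simp: mult_neg_neg less_imp_le)
    then show ?thesis
      using False by (simp add: algebra_simps)
  qed (use a in \<open>simp add: mult_nonpos_nonneg\<close>)
  then have "eps * sig * (a * (\<bar>s\<bar>^3 * s)) \<le> eps * sig * (R^3 * (a * min s 0))"
    using es by (rule mult_left_mono)
  moreover have "0 \<le> 2 * eps * sig * (\<bar>a\<bar>^3 * (a * a))"
    using es by simp
  moreover have "q * (a * ba a) \<le> 0"
    using a ba_nonneg[of a] q_nonneg by (simp add: mult_nonneg_nonpos mult_nonpos_nonneg)
  moreover have "0 \<le> lam * a^2"
    using lam_nonneg by simp
  moreover have "a * fa a s = - lam * a^2 + lam * (a * s) + eps * sig * (a * (\<bar>s\<bar>^3 * s))
      - 2 * eps * sig * (\<bar>a\<bar>^3 * (a * a)) + q * (a * ba a)"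
    unfolding rhs_a_def by (simp add: algebra_simps power2_eq_square)
  ultimately have "a * fa a s \<le> lam * (a * min s 0) + eps * sig * (R^3 * (a * min s 0))"
    by linarith
  then show ?thesis
    using a by (simp add: algebra_simps)
qed simp

lemma min_zero_mult_rhs_s_le:
  assumes "\<bar>a\<bar> \<le> R" "\<bar>s\<bar> \<le> R"
  shows "min s 0 * fs a s \<le> (lam + eps * sig * R^3) * (min a 0 * min s 0)"
proof (cases "0 \<le> s")
  case False
  then have s: "s < 0"
    by simp
  have es: "0 \<le> eps * sig"
    using eps_nonneg sig_nonneg by simp
  have "s * a \<le> s * min a 0"
    using s by (cases "0 \<le> a") (auto simp: mult_nonpos_nonneg)
  then have "lam * (s * a) \<le> lam * (s * min a 0)"
    using lam_nonneg by (rule mult_left_mono)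
  moreover have "s * (\<bar>a\<bar>^3 * a) \<le> R^3 * (s * min a 0)"
  proof (cases "0 \<le> a")
    case False
    then have "\<bar>a\<bar>^3 * (s * a) \<le> R^3 * (s * a)"
      using s assms by (intro mult_right_mono power_mono) (auto simp: mult_neg_neg less_imp_le)
    then show ?thesis
      using False by (simp add: algebra_simps)
  qed (use s in \<open>simp add: mult_nonpos_nonneg\<close>)
  then have "eps * sig * (s * (\<bar>a\<bar>^3 * a)) \<le> eps * sig * (R^3 * (s * min a 0))"
    using es by (rule mult_left_mono)
  moreover have "0 \<le> sig * (\<bar>s\<bar>^3 * (s * s))"
    using sig_nonneg by simp
  moreover have "q * (s * bs s) \<le> 0"
    using s bs_nonneg[of s] q_nonneg by (simp add: mult_nonneg_nonpos mult_nonpos_nonneg)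
  moreover have "0 \<le> lam * s^2"
    using lam_nonneg by simp
  moreover have "s * fs a s = - lam * s^2 + lam * (s * a) - sig * (\<bar>s\<bar>^3 * (s * s))
      + eps * sig * (s * (\<bar>a\<bar>^3 * a)) + q * (s * bs s)"
    unfolding rhs_s_def by (simp add: algebra_simps power2_eq_square)
  ultimately have "s * fs a s \<le> lam * (s * min a 0) + eps * sig * (R^3 * (s * min a 0))"
    by linarith
  then show ?thesis
    using s by (simp add: algebra_simps)
qed simp

lemma solution_nonneg:
  assumes sol: "solution a0 s0 T Ta Ts" and "0 \<le> a0" "0 \<le> s0" and t: "0 \<le> t" "ereal t < T"
  shows "0 \<le> Ta t \<and> 0 \<le> Ts t"
proof -
  obtain B where B: "0 \<le> B" "\<And>s. s \<in> {0..t} \<Longrightarrow> \<bar>Ta s\<bar> \<le> B \<and> \<bar>Ts s\<bar> \<le> B"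
    using solution_bounded_Icc[OF sol t(2)] by blast
  define K where "K = lam + eps * sig * B^3"
  have K: "0 \<le> K"
    using lam_nonneg eps_nonneg sig_nonneg B(1) by (simp add: K_def)
  define w where "w s = (min (Ta s) 0)^2 + (min (Ts s) 0)^2" for s
  define w' where "w' s = 2 * min (Ta s) 0 * (fa (Ta s) (Ts s) / ga)
    + 2 * min (Ts s) 0 * (fs (Ta s) (Ts s) / gs)" for s
  have "w t = 0"
  proof (rule gronwall_vanishing[of t w w' "K * (1 / ga + 1 / gs)"])
    fix u assume u: "u \<in> {0..t}"
    show "(w has_real_derivative w' u) (at u within {0..t})"
      unfolding w_def w'_def
      by (intro DERIV_add DERIV_chain2[OF has_real_derivative_min_zero_sq]
          solution_has_derivative_Icc[OF sol t(2) u])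
    define am sm where "am = min (Ta u) 0" and "sm = min (Ts u) 0"
    have "am * fa (Ta u) (Ts u) \<le> K * (am * sm)" "sm * fs (Ta u) (Ts u) \<le> K * (am * sm)"
      unfolding am_def sm_def K_def using B(2)[OF u]
      by (auto intro: min_zero_mult_rhs_a_le min_zero_mult_rhs_s_le)
    then have "w' u \<le> 2 * (K * (am * sm)) / ga + 2 * (K * (am * sm)) / gs"
      unfolding w'_def am_def sm_def using ga_pos gs_pos
      by (simp add: add_mono divide_right_mono)
    also have "\<dots> = K * (1 / ga + 1 / gs) * (2 * (am * sm))"
      by (simp add: field_simps)
    also have "\<dots> \<le> K * (1 / ga + 1 / gs) * (am^2 + sm^2)"
      using zero_le_power2[of "am - sm"] K ga_pos gs_pos
      by (intro mult_left_mono) (auto simp: power2_eq_square algebra_simps)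
    finally show "w' u \<le> K * (1 / ga + 1 / gs) * w u"
      by (simp add: w_def am_def sm_def)
    show "0 \<le> w u"
      by (simp add: w_def)
  qed (use assms solution_init[OF sol] in \<open>simp_all add: w_def\<close>)
  then show ?thesis
    by (simp add: w_def add_nonneg_eq_0_iff min_def split: if_splits)
qed

end

section \<open>Maximal solutions\<close>

lemma unbounded_weighted_sum:
  fixes TA TS :: "real \<Rightarrow> real"
  assumes "0 < \<alpha>" "0 < \<beta>"
    and nonneg: "\<And>t. 0 \<le> t \<Longrightarrow> t < T \<Longrightarrow> 0 \<le> TA t \<and> 0 \<le> TS t"
    and unbounded: "\<And>R. \<exists>t. 0 \<le> t \<and> t < T \<and> \<not> (\<bar>TA t\<bar> \<le> R \<and> \<bar>TS t\<bar> \<le> R)"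
  shows "\<exists>t. 0 \<le> t \<and> t < T \<and> M < \<alpha> * TA t + \<beta> * TS t"
proof (rule ccontr)
  assume "\<not> ?thesis"
  then have le_M: "\<alpha> * TA t + \<beta> * TS t \<le> M" if "0 \<le> t" "t < T" for t
    using that by (meson not_less)
  have "\<bar>TA t\<bar> \<le> max (M / \<alpha>) (M / \<beta>) \<and> \<bar>TS t\<bar> \<le> max (M / \<alpha>) (M / \<beta>)"
    if "0 \<le> t" "t < T" for t
  proof -
    have "0 \<le> \<alpha> * TA t" "0 \<le> \<beta> * TS t"
      using nonneg[OF that] assms(1,2) by simp_all
    then have "\<alpha> * TA t \<le> M" "\<beta> * TS t \<le> M"
      using le_M[OF that] by linarith+
    then have "TA t \<le> M / \<alpha>" "TS t \<le> M / \<beta>"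
      using assms(1,2) by (simp_all add: pos_le_divide_eq mult.commute)
    then show ?thesis
      using nonneg[OF that] by auto
  qed
  then show False
    using unbounded by blast
qed

lemma blows_up_if_unbounded_monotone:
  fixes TA TS :: "real \<Rightarrow> real"
  assumes "0 < \<alpha>" "0 < \<beta>"
    and nonneg: "\<And>t. 0 \<le> t \<Longrightarrow> t < T \<Longrightarrow> 0 \<le> TA t \<and> 0 \<le> TS t"
    and mono: "\<And>x y. 0 \<le> x \<Longrightarrow> x \<le> y \<Longrightarrow> y < T \<Longrightarrow> \<alpha> * TA x + \<beta> * TS x \<le> \<alpha> * TA y + \<beta> * TS y"
    and unbounded: "\<And>R. \<exists>t. 0 \<le> t \<and> t < T \<and> \<not> (\<bar>TA t\<bar> \<le> R \<and> \<bar>TS t\<bar> \<le> R)"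
  shows "blows_up (ereal T) TA TS"
proof -
  define c where "c = max \<alpha> \<beta>"
  have "0 < c"
    using \<open>0 < \<alpha>\<close> by (simp add: c_def)
  have le_c: "\<alpha> * TA t + \<beta> * TS t \<le> c * (\<bar>TA t\<bar> + \<bar>TS t\<bar>)" if "0 \<le> t" "t < T" for t
  proof -
    have "\<alpha> * TA t \<le> c * TA t" "\<beta> * TS t \<le> c * TS t"
      using nonneg[OF that] by (auto simp: c_def intro!: mult_right_mono)
    then show ?thesis
      using nonneg[OF that] by (simp add: distrib_left)
  qed
  have "\<forall>\<^sub>F x in at_left T. Z \<le> \<bar>TA x\<bar> + \<bar>TS x\<bar>" for Z
  proof -
    obtain t1 where t1: "0 \<le> t1" "t1 < T" "c * Z < \<alpha> * TA t1 + \<beta> * TS t1"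
      using unbounded_weighted_sum[OF assms(1-3) unbounded] by blast
    show ?thesis
      using eventually_at_left_real[OF \<open>t1 < T\<close>]
    proof (rule eventually_mono)
      fix x assume "x \<in> {t1<..<T}"
      then have "c * Z < c * (\<bar>TA x\<bar> + \<bar>TS x\<bar>)"
        using mono[of t1 x] le_c[of x] t1 by fastforce
      then show "Z \<le> \<bar>TA x\<bar> + \<bar>TS x\<bar>"
        using \<open>0 < c\<close> by simp
    qed
  qed
  then show ?thesis
    unfolding blows_up_def by (simp add: filterlim_at_top)
qed

context energy_balance_model
begin

lemma solution_shift:
  assumes sol: "solution a0 s0 (ereal T) Ta Ts" and "0 \<le> t0" "t0 < T"
  shows "solution (Ta t0) (Ts t0) (ereal (T - t0)) (\<lambda>s. Ta (s + t0)) (\<lambda>s. Ts (s + t0))"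
  unfolding is_solution_def
proof (intro conjI allI impI)
  fix t assume "0 \<le> t \<and> ereal t < ereal (T - t0)"
  then have t: "0 \<le> t + t0" "ereal (t + t0) < ereal T"
    using assms by auto
  have sub: "time_interval (ereal (T - t0)) \<subseteq> {x. x + t0 \<in> time_interval (ereal T)}"
    using assms by auto
  show "\<exists>Da Ds. ((\<lambda>s. Ta (s + t0)) has_real_derivative Da) (at t within time_interval (ereal (T - t0))) \<and>
      ((\<lambda>s. Ts (s + t0)) has_real_derivative Ds) (at t within time_interval (ereal (T - t0))) \<and>
      ga * Da = fa (Ta (t + t0)) (Ts (t + t0)) \<and> gs * Ds = fs (Ta (t + t0)) (Ts (t + t0))"
    using has_field_derivative_subset[OF has_real_derivative_translate sub,
        OF solution_has_derivative(1)[OF sol t]]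
      has_field_derivative_subset[OF has_real_derivative_translate sub,
        OF solution_has_derivative(2)[OF sol t]] ga_pos gs_pos
    by (intro exI conjI) auto
qed (use assms in auto)

lemma solution_equation_local:
  assumes sol: "solution b0 c0 T' Wa Ws" and "0 \<le> t - t0" "ereal (t - t0) < T'"
    and "t \<in> time_interval T" "open U" "t \<in> U"
    and dom: "{x. x - t0 \<in> time_interval T'} \<inter> U = time_interval T \<inter> U"
    and agree: "\<And>x. x \<in> time_interval T \<inter> U \<Longrightarrow> Za x = Wa (x - t0) \<and> Zs x = Ws (x - t0)"
  shows "\<exists>Da Ds. (Za has_real_derivative Da) (at t within time_interval T) \<and>
    (Zs has_real_derivative Ds) (at t within time_interval T) \<and>
    ga * Da = fa (Za t) (Zs t) \<and> gs * Ds = fs (Za t) (Zs t)"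
proof -
  note deriv = solution_has_derivative[OF sol assms(2,3)]
  have "((\<lambda>x. Wa (x + - t0)) has_real_derivative fa (Wa (t - t0)) (Ws (t - t0)) / ga)
      (at t within {x. x + - t0 \<in> time_interval T'})"
    "((\<lambda>x. Ws (x + - t0)) has_real_derivative fs (Wa (t - t0)) (Ws (t - t0)) / gs)
      (at t within {x. x + - t0 \<in> time_interval T'})"
    by (rule has_real_derivative_translate; use deriv in simp)+
  then have shifted: "((\<lambda>x. Wa (x - t0)) has_real_derivative fa (Wa (t - t0)) (Ws (t - t0)) / ga)
      (at t within {x. x - t0 \<in> time_interval T'})"
    "((\<lambda>x. Ws (x - t0)) has_real_derivative fs (Wa (t - t0)) (Ws (t - t0)) / gs)
      (at t within {x. x - t0 \<in> time_interval T'})"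
    by simp_all
  have "(Za has_real_derivative fa (Wa (t - t0)) (Ws (t - t0)) / ga) (at t within time_interval T)"
    by (rule has_real_derivative_transfer_local[OF shifted(1) assms(4-6) dom]) (use agree in auto)
  moreover have "(Zs has_real_derivative fs (Wa (t - t0)) (Ws (t - t0)) / gs) (at t within time_interval T)"
    by (rule has_real_derivative_transfer_local[OF shifted(2) assms(4-6) dom]) (use agree in auto)
  moreover have "Za t = Wa (t - t0)" "Zs t = Ws (t - t0)"
    using agree[of t] assms(4,6) by auto
  ultimately show ?thesis
    using ga_pos gs_pos by (intro exI conjI) auto
qed

lemma solution_concat:
  assumes sol: "solution a0 s0 (ereal T) Ta Ts" and "0 \<le> t0" "t0 < T"
    and ext: "solution (Ta t0) (Ts t0) (ereal h) Wa Ws" and "T < t0 + h"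
  shows "solution a0 s0 (ereal (t0 + h))
    (\<lambda>x. if x < T then Ta x else Wa (x - t0)) (\<lambda>x. if x < T then Ts x else Ws (x - t0))"
  unfolding is_solution_def
proof (intro conjI allI impI)
  have agree: "Ta x = Wa (x - t0) \<and> Ts x = Ws (x - t0)" if "t0 \<le> x" "x < T" for x
    using solution_unique[OF solution_shift[OF sol \<open>0 \<le> t0\<close> \<open>t0 < T\<close>] ext, of "x - t0"]
      that \<open>T < t0 + h\<close> by auto
  fix t assume t: "0 \<le> t \<and> ereal t < ereal (t0 + h)"
  consider "t < T" | "T \<le> t"
    by linarith
  then show "\<exists>Da Ds.
      ((\<lambda>x. if x < T then Ta x else Wa (x - t0)) has_real_derivative Da) (at t within time_interval (ereal (t0 + h))) \<and>
      ((\<lambda>x. if x < T then Ts x else Ws (x - t0)) has_real_derivative Ds) (at t within time_interval (ereal (t0 + h))) \<and>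
      ga * Da = fa (if t < T then Ta t else Wa (t - t0)) (if t < T then Ts t else Ws (t - t0)) \<and>
      gs * Ds = fs (if t < T then Ta t else Wa (t - t0)) (if t < T then Ts t else Ws (t - t0))"
  proof cases
    case 1
    show ?thesis
      by (rule solution_equation_local[OF sol, of t 0 _ "{..<T}"]) (use 1 t \<open>T < t0 + h\<close> in auto)
  next
    case 2
    show ?thesis
      by (rule solution_equation_local[OF ext, of t t0 _ "{t0<..<t0 + h}"])
        (use 2 t \<open>0 \<le> t0\<close> \<open>t0 < T\<close> agree in auto)
  qed
qed (use assms solution_init[OF sol] in auto)

lemma solution_extend:
  assumes sol: "solution a0 s0 (ereal T) Ta Ts"
    and bounded: "\<And>t. 0 \<le> t \<Longrightarrow> t < T \<Longrightarrow> \<bar>Ta t\<bar> \<le> R \<and> \<bar>Ts t\<bar> \<le> R"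
  shows "\<exists>T' > T. \<exists>Za Zs. solution a0 s0 (ereal T') Za Zs"
proof -
  have "0 < T"
    using solution_init[OF sol] by simp
  then have "0 \<le> R"
    using bounded[of 0] by linarith
  then obtain h where "0 < h"
    and local: "\<And>a s. \<bar>a\<bar> \<le> R \<Longrightarrow> \<bar>s\<bar> \<le> R \<Longrightarrow> \<exists>Wa Ws. solution a s (ereal h) Wa Ws"
    using local_existence by blast
  define t0 where "t0 = max 0 (T - h / 2)"
  have t0: "0 \<le> t0" "t0 < T" "T < t0 + h"
    using \<open>0 < h\<close> \<open>0 < T\<close> by (auto simp: t0_def)
  obtain Wa Ws where "solution (Ta t0) (Ts t0) (ereal h) Wa Ws"
    using local bounded[OF t0(1,2)] by blast
  from solution_concat[OF sol t0(1,2) this t0(3)] show ?thesis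
    using t0(3) by blast
qed

definition glued_solution :: "real \<Rightarrow> real \<Rightarrow> real \<Rightarrow> real \<times> real" where
  "glued_solution a0 s0 t = (SOME p. \<exists>r Ta Ts. t < r \<and> solution a0 s0 (ereal r) Ta Ts \<and> p = (Ta t, Ts t))"

lemma glued_solution_eq:
  assumes sol: "solution a0 s0 (ereal r) Ta Ts" and "0 \<le> t" "t < r"
  shows "glued_solution a0 s0 t = (Ta t, Ts t)"
proof -
  have "\<exists>p. \<exists>r Ta Ts. t < r \<and> solution a0 s0 (ereal r) Ta Ts \<and> p = (Ta t, Ts t)"
    using assms by blast
  then obtain r' Ta' Ts' where "t < r'" "solution a0 s0 (ereal r') Ta' Ts'"
    "glued_solution a0 s0 t = (Ta' t, Ts' t)"
    unfolding glued_solution_def by (rule someI_ex[THEN exE]) blast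
  moreover note solution_unique[OF this(2) sol, of t]
  ultimately show ?thesis
    using assms by auto
qed

lemma solution_glued:
  assumes "0 < Tm"
    and covered: "\<And>t. 0 \<le> t \<Longrightarrow> t < Tm \<Longrightarrow> \<exists>r Ta Ts. t < r \<and> r \<le> Tm \<and> solution a0 s0 (ereal r) Ta Ts"
  shows "solution a0 s0 (ereal Tm) (\<lambda>t. fst (glued_solution a0 s0 t)) (\<lambda>t. snd (glued_solution a0 s0 t))"
    (is "solution _ _ _ ?TA ?TS")
  unfolding is_solution_def
proof (intro conjI allI impI)
  obtain r Ta Ts where "0 < r" "solution a0 s0 (ereal r) Ta Ts"
    using covered[of 0] \<open>0 < Tm\<close> by auto
  then show "?TA 0 = a0" "?TS 0 = s0"
    using glued_solution_eq[of a0 s0 r Ta Ts 0] solution_init by auto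
next
  fix t assume t: "0 \<le> t \<and> ereal t < ereal Tm"
  then obtain r Ta Ts where r: "t < r" "r \<le> Tm" and sol: "solution a0 s0 (ereal r) Ta Ts"
    using covered[of t] by auto
  show "\<exists>Da Ds. (?TA has_real_derivative Da) (at t within time_interval (ereal Tm)) \<and>
      (?TS has_real_derivative Ds) (at t within time_interval (ereal Tm)) \<and>
      ga * Da = fa (?TA t) (?TS t) \<and> gs * Ds = fs (?TA t) (?TS t)"
    by (rule solution_equation_local[OF sol, of t 0 _ "{..<r}"])
      (use t r glued_solution_eq[OF sol] in auto)
qed (use assms in simp)

lemma longest_solution_exists:
  assumes bound: "\<And>T Ta Ts. solution a0 s0 T Ta Ts \<Longrightarrow> T \<le> ereal Tb"
  obtains Tm TA TS where "solution a0 s0 (ereal Tm) TA TS"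
    and "\<And>T Ta Ts. solution a0 s0 T Ta Ts \<Longrightarrow> T \<le> ereal Tm"
proof -
  define S where "S = {r. \<exists>Ta Ts. solution a0 s0 (ereal r) Ta Ts}"
  obtain h where "0 < h" and "\<exists>Ta Ts. solution a0 s0 (ereal h) Ta Ts"
    using local_existence[of "max \<bar>a0\<bar> \<bar>s0\<bar>"] by force
  then have "h \<in> S"
    by (simp add: S_def)
  have "bdd_above S"
    using bound by (force simp: S_def bdd_above_def)
  define Tm where "Tm = Sup S"
  have le_Tm: "r \<le> Tm" if "r \<in> S" for r
    unfolding Tm_def using that \<open>bdd_above S\<close> by (rule cSup_upper)
  have "solution a0 s0 (ereal Tm) (\<lambda>t. fst (glued_solution a0 s0 t)) (\<lambda>t. snd (glued_solution a0 s0 t))"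
  proof (rule solution_glued)
    show "0 < Tm"
      using le_Tm[OF \<open>h \<in> S\<close>] \<open>0 < h\<close> by simp
    fix t assume "0 \<le> t" "t < Tm"
    then obtain r where "r \<in> S" "t < r"
      using less_cSup_iff[of S t] \<open>h \<in> S\<close> \<open>bdd_above S\<close> unfolding Tm_def by blast
    then show "\<exists>r Ta Ts. t < r \<and> r \<le> Tm \<and> solution a0 s0 (ereal r) Ta Ts"
      using le_Tm by (auto simp: S_def)
  qed
  moreover have "T \<le> ereal Tm" if sol: "solution a0 s0 T Ta Ts" for T Ta Ts
  proof -
    obtain r where "T = ereal r"
      using bound[OF sol] solution_init[OF sol] by (cases T) auto
    then show ?thesis
      using le_Tm[of r] sol by (auto simp: S_def)
  qed
  ultimately show ?thesis
    using that by blast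
qed

lemma longest_solution_is_unique_maximal:
  assumes sol: "solution a0 s0 (ereal Tm) TA TS"
    and longest: "\<And>T Ta Ts. solution a0 s0 T Ta Ts \<Longrightarrow> T \<le> ereal Tm"
  shows "is_maximal_solution ga gs lam eps sig q ba bs a0 s0 (ereal Tm) TA TS"
    and "is_maximal_solution ga gs lam eps sig q ba bs a0 s0 T Ta Ts \<Longrightarrow>
      T = ereal Tm \<and> (\<forall>t. 0 \<le> t \<and> ereal t < ereal Tm \<longrightarrow> Ta t = TA t \<and> Ts t = TS t)"
proof -
  show "is_maximal_solution ga gs lam eps sig q ba bs a0 s0 (ereal Tm) TA TS"
    unfolding is_maximal_solution_def using sol longest by (auto intro: order.antisym)
next
  assume max: "is_maximal_solution ga gs lam eps sig q ba bs a0 s0 T Ta Ts"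
  then have "solution a0 s0 T Ta Ts"
    by (simp add: is_maximal_solution_def)
  then have agree: "\<forall>t. 0 \<le> t \<and> ereal t < T \<longrightarrow> TA t = Ta t \<and> TS t = Ts t"
    using solution_unique[OF sol] longest by (meson less_le_trans)
  then have "T = ereal Tm"
    using max sol longest[OF \<open>solution a0 s0 T Ta Ts\<close>] unfolding is_maximal_solution_def by metis
  then show "T = ereal Tm \<and> (\<forall>t. 0 \<le> t \<and> ereal t < ereal Tm \<longrightarrow> Ta t = TA t \<and> Ts t = TS t)"
    using agree by auto
qed

lemma longest_solution_unbounded:
  assumes sol: "solution a0 s0 (ereal Tm) TA TS"
    and longest: "\<And>T Ta Ts. solution a0 s0 T Ta Ts \<Longrightarrow> T \<le> ereal Tm"
  shows "\<exists>t. 0 \<le> t \<and> t < Tm \<and> \<not> (\<bar>TA t\<bar> \<le> R \<and> \<bar>TS t\<bar> \<le> R)"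
proof (rule ccontr)
  assume "\<not> ?thesis"
  then obtain T' Za Zs where "Tm < T'" "solution a0 s0 (ereal T') Za Zs"
    using solution_extend[OF sol] by blast
  then show False
    using longest by fastforce
qed

theorem unique_maximal_solution_blows_up_if_monotone:
  assumes "0 \<le> a0" "0 \<le> s0" "0 < \<alpha>" "0 < \<beta>"
    and bound: "\<And>T Ta Ts. solution a0 s0 T Ta Ts \<Longrightarrow> T \<le> ereal Tb"
    and mono: "\<And>T Ta Ts x y. solution a0 s0 T Ta Ts \<Longrightarrow> 0 \<le> x \<Longrightarrow> x \<le> y \<Longrightarrow> ereal y < T \<Longrightarrow>
      \<alpha> * Ta x + \<beta> * Ts x \<le> \<alpha> * Ta y + \<beta> * Ts y"
  shows "unique_maximal_solution_blows_up ga gs lam eps sig q ba bs a0 s0"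
proof -
  obtain Tm TA TS where sol: "solution a0 s0 (ereal Tm) TA TS"
    and longest: "\<And>T Ta Ts. solution a0 s0 T Ta Ts \<Longrightarrow> T \<le> ereal Tm"
    using longest_solution_exists[of a0 s0 Tb] bound by blast
  have "\<exists>t. 0 \<le> t \<and> t < Tm \<and> \<not> (\<bar>TA t\<bar> \<le> R \<and> \<bar>TS t\<bar> \<le> R)" for R
    using longest by (rule longest_solution_unbounded[OF sol])
  then have "blows_up (ereal Tm) TA TS"
    using assms(3,4) solution_nonneg[OF sol assms(1,2)] mono[OF sol]
    by (intro blows_up_if_unbounded_monotone[of \<alpha> \<beta>]) auto
  moreover have "is_maximal_solution ga gs lam eps sig q ba bs a0 s0 (ereal Tm) TA TS"
    using sol longest by (rule longest_solution_is_unique_maximal(1))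
  moreover have "T = ereal Tm \<and> (\<forall>t. 0 \<le> t \<and> ereal t < ereal Tm \<longrightarrow> Ta t = TA t \<and> Ts t = TS t)"
    if "is_maximal_solution ga gs lam eps sig q ba bs a0 s0 T Ta Ts" for T Ta Ts
    using sol longest that by (rule longest_solution_is_unique_maximal(2))
  ultimately show ?thesis
    unfolding unique_maximal_solution_blows_up_def by blast
qed

end

section \<open>Blow-up for emissivity above two\<close>

locale energy_balance_blowup = energy_balance_model +
  assumes sig_pos: "0 < sig" and eps_gt_two: "2 < eps"
begin

definition \<kappa> :: real where
  "\<kappa> = (2 + eps) / 2"

definition \<delta> :: real where
  "\<delta> = (eps - 2) / 2"

definition energy :: "real \<Rightarrow> real \<Rightarrow> real" where
  "energy a s = ga * a + \<kappa> * gs * s"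

lemma \<kappa>_gt_two: "2 < \<kappa>" and \<delta>_pos: "0 < \<delta>"
  using eps_gt_two by (simp_all add: \<kappa>_def \<delta>_def)

lemma energy_nonneg: "0 \<le> a \<Longrightarrow> 0 \<le> s \<Longrightarrow> 0 \<le> energy a s"
  using ga_pos gs_pos \<kappa>_gt_two by (simp add: energy_def)

text \<open>The weight \<open>\<kappa>\<close> makes the quartic coefficients of \<open>fa + \<kappa> fs\<close> equal to \<open>\<sigma> \<delta>\<close> (surface)
  and \<open>\<epsilon> \<sigma> \<delta>\<close> (atmosphere), both positive precisely because \<open>\<epsilon> > 2\<close>.\<close>
lemma energy_rate_lower_bound:
  assumes "0 \<le> a" "0 \<le> s"
  shows "- lam * (\<kappa> - 1) * s + sig * \<delta> * (a^4 + s^4) + q * ba a + \<kappa> * q * bs s \<le> fa a s + \<kappa> * fs a s"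
proof -
  have "fa a s + \<kappa> * fs a s = lam * (\<kappa> - 1) * a - lam * (\<kappa> - 1) * s + sig * \<delta> * s^4
      + eps * sig * \<delta> * a^4 + q * ba a + \<kappa> * q * bs s"
    using assms unfolding rhs_a_def rhs_s_def \<kappa>_def \<delta>_def
    by (simp add: field_simps power4_eq_xxxx power3_eq_cube)
  moreover have "0 \<le> lam * (\<kappa> - 1) * a"
    using lam_nonneg \<kappa>_gt_two assms by simp
  moreover have "sig * \<delta> * a^4 \<le> eps * sig * \<delta> * a^4"
    using mult_right_mono[of 1 eps "sig * \<delta> * a^4"] eps_gt_two sig_pos \<delta>_pos by (simp add: mult.assoc)
  ultimately show ?thesis
    by (simp add: algebra_simps)
qed

definition quartic_coeff :: real where
  "quartic_coeff = sig * \<delta> / (8 * (ga + \<kappa> * gs)^4)"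

definition coupling_coeff :: real where
  "coupling_coeff = lam * (\<kappa> - 1) / (\<kappa> * gs)"

lemma quartic_coeff_pos: "0 < quartic_coeff"
proof -
  have "0 < ga + \<kappa> * gs"
    using ga_pos gs_pos \<kappa>_gt_two by (simp add: add_pos_pos)
  then show ?thesis
    using sig_pos \<delta>_pos by (simp add: quartic_coeff_def)
qed

lemma coupling_coeff_nonneg: "0 \<le> coupling_coeff"
  using lam_nonneg gs_pos \<kappa>_gt_two by (simp add: coupling_coeff_def)

lemma energy_quartic_le:
  assumes "0 \<le> a" "0 \<le> s"
  shows "quartic_coeff * (energy a s)^4 \<le> sig * \<delta> * (a^4 + s^4)"
proof -
  have "0 < ga + \<kappa> * gs"
    using ga_pos gs_pos \<kappa>_gt_two by (simp add: add_pos_pos)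
  have "energy a s \<le> (ga + \<kappa> * gs) * (a + s)"
    using assms ga_pos gs_pos \<kappa>_gt_two by (simp add: energy_def algebra_simps)
  then have "(energy a s)^4 \<le> ((ga + \<kappa> * gs) * (a + s))^4"
    using energy_nonneg[OF assms] by (intro power_mono) auto
  also have "\<dots> \<le> (ga + \<kappa> * gs)^4 * (8 * (a^4 + s^4))"
    unfolding power_mult_distrib by (intro mult_left_mono add_pow4_le) simp
  finally have "quartic_coeff * (energy a s)^4 \<le> quartic_coeff * (8 * (ga + \<kappa> * gs)^4 * (a^4 + s^4))"
    using quartic_coeff_pos by (intro mult_left_mono) (auto simp: algebra_simps)
  then show ?thesis
    using \<open>0 < ga + \<kappa> * gs\<close> by (simp add: quartic_coeff_def)
qed

lemma coupling_le_energy: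
  assumes "0 \<le> a"
  shows "lam * (\<kappa> - 1) * s \<le> coupling_coeff * energy a s"
proof -
  have "coupling_coeff * energy a s = lam * (\<kappa> - 1) * ga * a / (\<kappa> * gs) + lam * (\<kappa> - 1) * s"
    using gs_pos \<kappa>_gt_two by (simp add: coupling_coeff_def energy_def field_simps)
  moreover have "0 \<le> lam * (\<kappa> - 1) * ga * a / (\<kappa> * gs)"
    using lam_nonneg \<kappa>_gt_two ga_pos gs_pos assms by simp
  ultimately show ?thesis
    by simp
qed

lemma energy_rate_ge_quartic_if_large:
  assumes "0 \<le> a" "0 \<le> s" and large: "2 * coupling_coeff / quartic_coeff + 1 \<le> energy a s"
  shows "quartic_coeff / 2 * (energy a s)^4 \<le> fa a s + \<kappa> * fs a s"
proof -
  define E where "E = energy a s"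
  have "0 \<le> 2 * coupling_coeff / quartic_coeff"
    using coupling_coeff_nonneg quartic_coeff_pos by simp
  then have "1 \<le> E"
    using large by (simp add: E_def)
  then have "E * 1 \<le> E * E^2"
    by (intro mult_left_mono) (auto simp: one_le_power)
  then have "2 * coupling_coeff / quartic_coeff \<le> E^3"
    using large by (simp add: E_def power2_eq_square power3_eq_cube)
  then have "coupling_coeff \<le> quartic_coeff / 2 * E^3"
    using quartic_coeff_pos by (simp add: field_simps)
  then have "coupling_coeff * E \<le> quartic_coeff / 2 * E^4"
    using \<open>1 \<le> E\<close> mult_right_mono[of coupling_coeff "quartic_coeff / 2 * E^3" E]
    by (simp add: power_numeral_reduce algebra_simps)
  moreover have "0 \<le> q * ba a" "0 \<le> \<kappa> * q * bs s"
    using q_nonneg ba_nonneg[of a] bs_nonneg[of s] \<kappa>_gt_two by simp_all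
  ultimately show ?thesis
    using energy_rate_lower_bound[OF assms(1,2)] energy_quartic_le[OF assms(1,2)]
      coupling_le_energy[OF assms(1), of s]
    by (simp add: E_def)
qed

lemma energy_has_derivative:
  assumes "solution a0 s0 T Ta Ts" "ereal t1 < T" "t \<in> {0..t1}"
  shows "((\<lambda>t. energy (Ta t) (Ts t) + C) has_real_derivative fa (Ta t) (Ts t) + \<kappa> * fs (Ta t) (Ts t))
    (at t within {0..t1})"
  unfolding energy_def using ga_pos gs_pos
  by (auto intro!: derivative_eq_intros solution_has_derivative_Icc[OF assms])

theorem unique_maximal_solution_blows_up_if_energy_riccati:
  assumes "0 \<le> a0" "0 \<le> s0" "0 < c" "0 < energy a0 s0 + C"
    and growth: "\<And>a s. 0 \<le> a \<Longrightarrow> 0 \<le> s \<Longrightarrow> (energy a0 s0 + C) / 2 \<le> energy a s + C \<Longrightarrow>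
      c * (energy a s + C)^4 \<le> fa a s + \<kappa> * fs a s"
  shows "unique_maximal_solution_blows_up ga gs lam eps sig q ba bs a0 s0"
proof -
  define Tb where "Tb = 1 / (3 * c * (energy a0 s0 + C)^3)"
  have riccati: "t1 < Tb \<and> (\<forall>x y. 0 \<le> x \<longrightarrow> x \<le> y \<longrightarrow> y \<le> t1 \<longrightarrow>
      energy (Ta x) (Ts x) + C \<le> energy (Ta y) (Ts y) + C)"
    if sol: "solution a0 s0 T Ta Ts" and "0 \<le> t1" "ereal t1 < T" for T Ta Ts t1
  proof -
    have init: "energy (Ta 0) (Ts 0) + C = energy a0 s0 + C"
      using solution_init[OF sol] by simp
    have "0 \<le> Ta t \<and> 0 \<le> Ts t" if "t \<in> {0..t1}" for t
      using solution_nonneg[OF sol assms(1,2)] that Icc_subset_time_interval[OF \<open>ereal t1 < T\<close>] by auto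
    then have "\<And>t. t \<in> {0..t1} \<Longrightarrow> (energy (Ta 0) (Ts 0) + C) / 2 \<le> energy (Ta t) (Ts t) + C \<Longrightarrow>
        c * (energy (Ta t) (Ts t) + C)^4 \<le> fa (Ta t) (Ts t) + \<kappa> * fs (Ta t) (Ts t)"
      using growth unfolding init by blast
    note ricc = riccati_on_Icc[OF \<open>0 \<le> t1\<close> \<open>0 < c\<close> _ energy_has_derivative[OF sol \<open>ereal t1 < T\<close>] this]
    show ?thesis
      using ricc assms(4) unfolding init Tb_def by auto
  qed
  show ?thesis
  proof (rule unique_maximal_solution_blows_up_if_monotone[of a0 s0 ga "\<kappa> * gs" Tb])
    fix T Ta Ts assume sol: "solution a0 s0 T Ta Ts"
    show "T \<le> ereal Tb"
    proof (rule ccontr)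
      assume "\<not> T \<le> ereal Tb"
      moreover have "0 \<le> Tb"
        using \<open>0 < c\<close> assms(4) by (simp add: Tb_def)
      ultimately show False
        using riccati[OF sol, of Tb] by (simp add: not_le)
    qed
    show "ga * Ta x + \<kappa> * gs * Ts x \<le> ga * Ta y + \<kappa> * gs * Ts y"
      if "0 \<le> x" "x \<le> y" "ereal y < T" for x y
      using riccati[OF sol, of y] that by (simp add: energy_def)
  qed (use assms ga_pos gs_pos \<kappa>_gt_two in auto)
qed

lemma unique_maximal_solution_blows_up_uncoupled:
  assumes "lam = 0" "0 < q" "0 < bm" "\<And>x. bm \<le> bs x" "0 \<le> a0" "0 \<le> s0"
  shows "unique_maximal_solution_blows_up ga gs lam eps sig q ba bs a0 s0"
proof -
  define m where "m = min quartic_coeff (\<kappa> * q * bm)"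
  have "0 < m"
    using quartic_coeff_pos \<kappa>_gt_two assms(2,3) by (simp add: m_def)
  show ?thesis
  proof (rule unique_maximal_solution_blows_up_if_energy_riccati[where C = 1 and c = "m / 8"])
    fix a s :: real assume as: "0 \<le> a" "0 \<le> s"
    define E where "E = energy a s"
    have "m / 8 * (E + 1)^4 \<le> m / 8 * (8 * (E^4 + 1^4))"
      using add_pow4_le[of E 1] \<open>0 < m\<close> by (intro mult_left_mono) auto
    also have "\<dots> = m * E^4 + m"
      by (simp add: algebra_simps)
    also have "\<dots> \<le> quartic_coeff * E^4 + \<kappa> * q * bm"
      by (intro add_mono mult_right_mono) (auto simp: m_def)
    also have "\<dots> \<le> sig * \<delta> * (a^4 + s^4) + \<kappa> * q * bs s"
      using energy_quartic_le[OF as] assms(2,4) \<kappa>_gt_two by (intro add_mono) (simp_all add: E_def)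
    also have "\<dots> \<le> fa a s + \<kappa> * fs a s"
      using energy_rate_lower_bound[OF as] \<open>lam = 0\<close> mult_nonneg_nonneg[OF q_nonneg ba_nonneg[of a]]
      by simp
    finally show "m / 8 * (energy a s + 1)^4 \<le> fa a s + \<kappa> * fs a s"
      by (simp add: E_def)
  qed (use assms \<open>0 < m\<close> energy_nonneg[of a0 s0] in auto)
qed

text \<open>Data of energy \<open>2 Y\<close> keep the energy above \<open>Y\<close>, where the coupling loss is absorbed by half of
  the quartic gain.\<close>
lemma exists_initial_data_blowing_up:
  "\<exists>a0 s0. 0 \<le> a0 \<and> 0 \<le> s0 \<and> unique_maximal_solution_blows_up ga gs lam eps sig q ba bs a0 s0"
proof -
  define Y where "Y = 2 * coupling_coeff / quartic_coeff + 1"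
  define X where "X = 2 * Y / (\<kappa> * gs)"
  have "1 \<le> Y"
    using coupling_coeff_nonneg quartic_coeff_pos by (simp add: Y_def)
  moreover have "0 < \<kappa> * gs"
    using gs_pos \<kappa>_gt_two by simp
  ultimately have "0 \<le> X" "energy 0 X = 2 * Y"
    using gs_pos \<kappa>_gt_two by (simp_all add: X_def energy_def)
  moreover have "unique_maximal_solution_blows_up ga gs lam eps sig q ba bs 0 X"
  proof (rule unique_maximal_solution_blows_up_if_energy_riccati[where C = 0 and c = "quartic_coeff / 2"])
    fix a s :: real assume "0 \<le> a" "0 \<le> s" "(energy 0 X + 0) / 2 \<le> energy a s + 0"
    then show "quartic_coeff / 2 * (energy a s + 0)^4 \<le> fa a s + \<kappa> * fs a s"
      using energy_rate_ge_quartic_if_large[of a s] \<open>energy 0 X = 2 * Y\<close> by (simp add: Y_def)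
  qed (use \<open>0 \<le> X\<close> \<open>energy 0 X = 2 * Y\<close> \<open>1 \<le> Y\<close> quartic_coeff_pos in auto)
  ultimately show ?thesis
    by blast
qed

end

section \<open>The piecewise linear coalbedo\<close>

lemma coalbedo_pl_eq_clamp:
  assumes "Tm < Tp"
  shows "coalbedo_pl Tm Tp bm bp x = bm + (bp - bm) * max 0 (min 1 ((x - Tm) / (Tp - Tm)))"
proof -
  have "0 < Tp - Tm"
    using assms by simp
  consider "x \<le> Tm" | "Tm < x" "x \<le> Tp" | "Tp < x"
    by linarith
  then show ?thesis
  proof cases
    case 1
    then have "(x - Tm) / (Tp - Tm) \<le> 0"
      using \<open>0 < Tp - Tm\<close> by (simp add: divide_nonpos_pos)
    then show ?thesis
      using 1 by (simp add: coalbedo_pl_def)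
  next
    case 2
    then have "0 \<le> (x - Tm) / (Tp - Tm)" "(x - Tm) / (Tp - Tm) \<le> 1"
      using \<open>0 < Tp - Tm\<close> by (auto simp: field_simps)
    then show ?thesis
      using 2 by (simp add: coalbedo_pl_def)
  next
    case 3
    then have "1 < (x - Tm) / (Tp - Tm)"
      using \<open>0 < Tp - Tm\<close> by (simp add: field_simps)
    then show ?thesis
      using 3 assms by (simp add: coalbedo_pl_def)
  qed
qed

lemma coalbedo_pl_lower_bound:
  assumes "Tm < Tp" "bm \<le> bp"
  shows "bm \<le> coalbedo_pl Tm Tp bm bp x"
  using assms by (simp add: coalbedo_pl_eq_clamp)

lemma coalbedo_pl_lipschitz:
  assumes "Tm < Tp" "bm \<le> bp"
  shows "((bp - bm) / (Tp - Tm))-lipschitz_on UNIV (coalbedo_pl Tm Tp bm bp)"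
proof (rule lipschitz_onI)
  fix x y :: real
  define clamp where "clamp z = max 0 (min 1 ((z - Tm) / (Tp - Tm)))" for z
  have "\<bar>clamp x - clamp y\<bar> \<le> \<bar>(x - Tm) / (Tp - Tm) - (y - Tm) / (Tp - Tm)\<bar>"
    by (simp add: clamp_def max_def min_def abs_if)
  also have "\<dots> = dist x y / (Tp - Tm)"
    using assms by (simp add: dist_real_def diff_divide_distrib[symmetric] abs_divide)
  finally have "(bp - bm) * \<bar>clamp x - clamp y\<bar> \<le> (bp - bm) * (dist x y / (Tp - Tm))"
    using assms by (intro mult_left_mono) auto
  then show "dist (coalbedo_pl Tm Tp bm bp x) (coalbedo_pl Tm Tp bm bp y) \<le> (bp - bm) / (Tp - Tm) * dist x y"
    using assms by (simp add: coalbedo_pl_eq_clamp clamp_def dist_real_def abs_mult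
        right_diff_distrib[symmetric])
qed (use assms in simp)

theorem proposition2p7:
  fixes ga gs :: real
  assumes "ga > 0" and "gs > 0"
  shows
   "(\<forall>q sig eps Tm Tp bm bp Ta0 Ts0.
       q > 0 \<longrightarrow> sig > 0 \<longrightarrow> 0 < Tm \<longrightarrow> Tm < Tp \<longrightarrow> 0 < bm \<longrightarrow> bm < bp \<longrightarrow>
       eps > 2 \<longrightarrow> Ta0 \<ge> 0 \<longrightarrow> Ts0 \<ge> 0 \<longrightarrow>
       unique_maximal_solution_blows_up ga gs 0 eps sig q (\<lambda>_. 0) (coalbedo_pl Tm Tp bm bp) Ta0 Ts0)
    \<and>
    (\<forall>lam q sig eps ba bs La Ls.
       lam > 0 \<longrightarrow> q > 0 \<longrightarrow> sig > 0 \<longrightarrow> eps > 2 \<longrightarrow>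
       (\<forall>x. ba x \<ge> 0) \<longrightarrow> (\<forall>x. bs x > 0) \<longrightarrow>
       La-lipschitz_on UNIV ba \<longrightarrow> Ls-lipschitz_on UNIV bs \<longrightarrow>
       (\<exists>Ta0 Ts0. Ta0 \<ge> 0 \<and> Ts0 \<ge> 0 \<and>
          unique_maximal_solution_blows_up ga gs lam eps sig q ba bs Ta0 Ts0))"
proof (intro conjI allI impI)
  fix q sig eps Tm Tp bm bp Ta0 Ts0 :: real
  assume "q > 0" "sig > 0" "0 < Tm" "Tm < Tp" "0 < bm" "bm < bp" "eps > 2" "Ta0 \<ge> 0" "Ts0 \<ge> 0"
  then interpret energy_balance_blowup ga gs 0 eps sig q "\<lambda>_. 0" "coalbedo_pl Tm Tp bm bp"
    0 "(bp - bm) / (Tp - Tm)"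
    using assms coalbedo_pl_lower_bound[of Tm Tp bm bp] coalbedo_pl_lipschitz[of Tm Tp bm bp]
    by unfold_locales (auto intro: order.trans[OF less_imp_le] simp: lipschitz_on_def)
  show "unique_maximal_solution_blows_up ga gs 0 eps sig q (\<lambda>_. 0) (coalbedo_pl Tm Tp bm bp) Ta0 Ts0"
    using \<open>Tm < Tp\<close> \<open>bm < bp\<close>
    by (intro unique_maximal_solution_blows_up_uncoupled[of bm])
      (auto intro: coalbedo_pl_lower_bound simp: \<open>q > 0\<close> \<open>0 < bm\<close> \<open>Ta0 \<ge> 0\<close> \<open>Ts0 \<ge> 0\<close>)
next
  fix lam q sig eps La Ls :: real and ba bs :: "real \<Rightarrow> real"
  assume "lam > 0" "q > 0" "sig > 0" "eps > 2" "\<forall>x. ba x \<ge> 0" "\<forall>x. bs x > 0"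
    "La-lipschitz_on UNIV ba" "Ls-lipschitz_on UNIV bs"
  then interpret energy_balance_blowup ga gs lam eps sig q ba bs La Ls
    using assms by unfold_locales (auto simp: less_imp_le)
  show "\<exists>Ta0 Ts0. Ta0 \<ge> 0 \<and> Ts0 \<ge> 0 \<and> unique_maximal_solution_blows_up ga gs lam eps sig q ba bs Ta0 Ts0"
    by (rule exists_initial_data_blowing_up)
qed

end
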